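(* There is a constant $C>0$ such that for every $\alpha>0$, every $n\ge0$, every $\psi_n\in\mathcal H$ in the $n$-photon sector and every $\psi_{n+1}\in\mathcal H$ in the $(n+1)$-photon sector (both with finite $H_f$-expectation), \[ \alpha^{3/2}\,\Big|\big(\sigma\cdot E^*\psi_{n+1},\,(p^2+H_f)^{-1}\,D^*\cdot D^*\psi_n\big)\Big|\le C\Big[\alpha^2(\Lambda+\Lambda^3)\|\psi_n\|^2+\alpha(\Lambda+\Lambda^2)(\psi_{n+1},H_f\psi_{n+1})\Big], \] where $D^*\cdot D^*=\sum_{j=1}^3D_j^*D_j^*$ and $\sigma\cdot E^*=\sum_{j=1}^3\sigma_jE_j^*$.
   Context: $p=-i\nabla_x$. Hilbert space $\mathcal H = L^2(\mathbb R^3;\mathbb C^2)\otimes\mathcal F_b(L^2(\mathbb R^3;\mathbb C^2))$ with bosonic operators $a_\lambda(k),a^*_\lambda(k)$ ($\lambda=1,2$) obeying the canonical commutation relations; the $n$-photon sector is the subspace of vectors whose Fock component is an $n$-particle state. Polarization vectors $\varepsilon_\lambda(k)\in\mathbb R^3$ with $\{k/|k|,\varepsilon_1(k),\varepsilon_2(k)\}$ orthonormal and $\varepsilon_\lambda(-k)=\pm\varepsilon_\lambda(k)$. Cutoff $\Lambda>0$, $\chi(|k|)=1$ for $|k|\le\Lambda$, $0$ otherwise. $G^\lambda(k)=\frac{\chi(|k|)}{2\pi|k|^{1/2}}\varepsilon_\lambda(k)$, $H^\lambda(k)=\frac{-i\chi(|k|)}{2\pi|k|^{1/2}}k\wedge\varepsilon_\lambda(k)$,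 $D(x)=\sum_\lambda\int G^\lambda(k)e^{ik\cdot x}a_\lambda(k)dk$, $E(x)=\sum_\lambda\int H^\lambda(k)e^{ik\cdot x}a_\lambda(k)dk$, with adjoints $D^*,E^*$; $\sigma_j$ are the Pauli matrices acting on the spin factor $\mathbb C^2$. $H_f=\sum_\lambda\int|k|a^*_\lambda(k)a_\lambda(k)dk$. *)

theory Defs
  imports "HOL-Analysis.Analysis"
begin

text \<open>A vector in the n-photon sector is represented by a function
  psi P ks, where P in R^3 is the electron momentum (Fourier variable of x),
  ks i = (k_i, lambda_i) (i < n) are the photon momenta and polarisations
  (lambda_i in {1,2}), and the value is a spinor in C^2.\<close>

type_synonym photons = "nat \<Rightarrow> (real^3) \<times> nat"
type_synonym sstate = "real^3 \<Rightarrow> photons \<Rightarrow> complex^2"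

definition photon_measure :: "((real^3) \<times> nat) measure" where
  "photon_measure = lborel \<Otimes>\<^sub>M count_space {1, 2}"

definition sector_measure :: "nat \<Rightarrow> ((real^3) \<times> photons) measure" where
  "sector_measure n = lborel \<Otimes>\<^sub>M (\<Pi>\<^sub>M i\<in>{..<n}. photon_measure)"

definition Hf_val :: "nat \<Rightarrow> photons \<Rightarrow> real" where
  "Hf_val n ks = (\<Sum>i<n. norm (fst (ks i)))"

definition in_sector :: "nat \<Rightarrow> sstate \<Rightarrow> bool" where
  "in_sector n psi \<longleftrightarrow>
     (\<lambda>(P, ks). psi P ks) \<in> borel_measurable (sector_measure n) \<and>
     integrable (sector_measure n) (\<lambda>(P, ks). (norm (psi P ks))\<^sup>2) \<and>
     (\<forall>\<pi>. \<pi> permutes {..<n} \<longrightarrow> (\<forall>P ks. psi P (ks \<circ> \<pi>) = psi P ks))"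

definition finite_Hf :: "nat \<Rightarrow> sstate \<Rightarrow> bool" where
  "finite_Hf n psi \<longleftrightarrow>
     integrable (sector_measure n) (\<lambda>(P, ks). Hf_val n ks * (norm (psi P ks))\<^sup>2)"

definition sq_norm :: "nat \<Rightarrow> sstate \<Rightarrow> real" where
  "sq_norm n psi = (\<integral>(P, ks). (norm (psi P ks))\<^sup>2 \<partial>sector_measure n)"

definition Hf_expect :: "nat \<Rightarrow> sstate \<Rightarrow> real" where
  "Hf_expect n psi = (\<integral>(P, ks). Hf_val n ks * (norm (psi P ks))\<^sup>2 \<partial>sector_measure n)"

definition drop_at :: "nat \<Rightarrow> nat \<Rightarrow> photons \<Rightarrow> photons" where
  "drop_at n i ks = (\<lambda>j. if j < n then (if j < i then ks j else ks (Suc j)) else undefined)"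

definition pol_ok :: "(nat \<Rightarrow> real^3 \<Rightarrow> real^3) \<Rightarrow> bool" where
  "pol_ok eps \<longleftrightarrow>
     (\<forall>l\<in>{1,2}. eps l \<in> borel_measurable borel) \<and>
     (\<forall>k. k \<noteq> 0 \<longrightarrow> norm (eps 1 k) = 1 \<and> norm (eps 2 k) = 1 \<and>
          eps 1 k \<bullet> eps 2 k = 0 \<and> k \<bullet> eps 1 k = 0 \<and> k \<bullet> eps 2 k = 0) \<and>
     (\<forall>l\<in>{1,2}. \<forall>k. eps l (- k) = eps l k \<or> eps l (- k) = - eps l k)"

definition chi :: "real \<Rightarrow> real^3 \<Rightarrow> real" where
  "chi \<Lambda> k = (if norm k \<le> \<Lambda> then 1 else 0)"

definition Gv :: "(nat \<Rightarrow> real^3 \<Rightarrow> real^3) \<Rightarrow> real \<Rightarrow> nat \<Rightarrow> real^3 \<Rightarrow> real^3" where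
  "Gv eps \<Lambda> l k = (chi \<Lambda> k / (2 * pi * sqrt (norm k))) *\<^sub>R eps l k"

definition Hv :: "(nat \<Rightarrow> real^3 \<Rightarrow> real^3) \<Rightarrow> real \<Rightarrow> nat \<Rightarrow> real^3 \<Rightarrow> complex^3" where
  "Hv eps \<Lambda> l k = (\<chi> j. (- \<i>) * complex_of_real (chi \<Lambda> k / (2 * pi * sqrt (norm k)))
                             * complex_of_real (cross3 k (eps l k) $ j))"

text \<open>D_j^* acting from the n- to the (n+1)-photon sector (momentum representation:
  e^{-ik.x} shifts the electron momentum P to P + k; a^* is the symmetrised creation).\<close>
definition Dstar :: "(nat \<Rightarrow> real^3 \<Rightarrow> real^3) \<Rightarrow> real \<Rightarrow> 3 \<Rightarrow> nat \<Rightarrow> sstate \<Rightarrow> sstate" where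
  "Dstar eps \<Lambda> j n psi = (\<lambda>P ks. complex_of_real (1 / sqrt (real (Suc n))) *s
      (\<Sum>i<Suc n. complex_of_real (Gv eps \<Lambda> (snd (ks i)) (fst (ks i)) $ j)
                    *s psi (P + fst (ks i)) (drop_at n i ks)))"

definition Estar :: "(nat \<Rightarrow> real^3 \<Rightarrow> real^3) \<Rightarrow> real \<Rightarrow> 3 \<Rightarrow> nat \<Rightarrow> sstate \<Rightarrow> sstate" where
  "Estar eps \<Lambda> j n psi = (\<lambda>P ks. complex_of_real (1 / sqrt (real (Suc n))) *s
      (\<Sum>i<Suc n. cnj (Hv eps \<Lambda> (snd (ks i)) (fst (ks i)) $ j)
                    *s psi (P + fst (ks i)) (drop_at n i ks)))"

definition pauli :: "3 \<Rightarrow> complex^2^2" where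
  "pauli j = (if j = 1 then vector [vector [0, 1], vector [1, 0]]
              else if j = 2 then vector [vector [0, - \<i>], vector [\<i>, 0]]
              else vector [vector [1, 0], vector [0, -1]])"

definition DstarDstar :: "(nat \<Rightarrow> real^3 \<Rightarrow> real^3) \<Rightarrow> real \<Rightarrow> nat \<Rightarrow> sstate \<Rightarrow> sstate" where
  "DstarDstar eps \<Lambda> n psi =
     (\<lambda>P ks. \<Sum>j\<in>UNIV. Dstar eps \<Lambda> j (Suc n) (Dstar eps \<Lambda> j n psi) P ks)"

definition sigmaEstar :: "(nat \<Rightarrow> real^3 \<Rightarrow> real^3) \<Rightarrow> real \<Rightarrow> nat \<Rightarrow> sstate \<Rightarrow> sstate" where
  "sigmaEstar eps \<Lambda> n psi = (\<lambda>P ks. \<Sum>j\<in>UNIV. pauli j *v Estar eps \<Lambda> j n psi P ks)"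

definition resolv :: "nat \<Rightarrow> sstate \<Rightarrow> sstate" where
  "resolv n psi = (\<lambda>P ks. complex_of_real (1 / ((norm P)\<^sup>2 + Hf_val n ks)) *s psi P ks)"

definition cinner2 :: "complex^2 \<Rightarrow> complex^2 \<Rightarrow> complex" where
  "cinner2 u v = (\<Sum>s\<in>UNIV. cnj (u $ s) * v $ s)"

definition sector_inner :: "nat \<Rightarrow> sstate \<Rightarrow> sstate \<Rightarrow> complex" where
  "sector_inner n phi psi = (\<integral>(P, ks). cinner2 (phi P ks) (psi P ks) \<partial>sector_measure n)"

end

theory Submission
  imports Defs
begin

text \<open>In momentum space the inner product is an integral over the electron momentum \<open>P\<close> and the
  photons. Pointwise, Cauchy-Schwarz in spin space and the triangle inequality bound the integrand by
  sums of products \<open>h(k\<^sub>i) |\<psi>\<^sub>n\<^sub>+\<^sub>1| g(k\<^sub>j) g(k\<^sub>l) |\<psi>\<^sub>n| / (P\<^sup>2 + H\<^sub>f)\<close>, where \<open>g\<close> and \<open>h\<close> majorise the form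
  factors of \<open>D\<close> and \<open>E\<close>. A weighted AM-GM inequality splits each product into a \<open>|\<psi>\<^sub>n\<^sub>+\<^sub>1|\<^sup>2\<close> term carrying
  \<open>|k\<^sub>j| |k\<^sub>l|\<close>, which the resolvent turns into the field energy of \<open>\<psi>\<^sub>n\<^sub>+\<^sub>1\<close>, and a \<open>|\<psi>\<^sub>n|\<^sup>2\<close> term carrying \<open>|k\<^sub>i|\<close>,
  which the resolvent absorbs. Integrating out the photons that are not arguments of \<open>\<psi>\<close>, after
  shifting \<open>P\<close> by their momenta, leaves \<open>\<integral>\<chi> = 8\<pi>\<Lambda>\<^sup>3/3\<close> in the first term and
  \<open>(\<integral>\<chi>/(4\<pi>\<^sup>2|k|\<^sup>2))\<^sup>2 \<le> (2\<Lambda>)\<^sup>2\<close> in the second; the weight \<open>\<surd>\<alpha> \<Lambda>\<close> balances the two powers of \<open>\<alpha>\<close>.\<close>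

section \<open>Integration over photon configurations\<close>

abbreviation photons_measure :: "nat \<Rightarrow> photons measure" where
  "photons_measure n \<equiv> \<Pi>\<^sub>M i\<in>{..<n}. photon_measure"

lemma distr_PiM_permutes:
  fixes M :: "'a measure"
  assumes "sigma_finite_measure M" and fin: "finite I" and t: "t permutes I"
  shows "distr (\<Pi>\<^sub>M i\<in>I. M) (\<Pi>\<^sub>M i\<in>I. M) (\<lambda>x. restrict (x \<circ> t) I) = (\<Pi>\<^sub>M i\<in>I. M)"
proof -
  interpret product_sigma_finite "\<lambda>_. M" by (simp add: product_sigma_finite_def assms(1))
  have tI: "\<And>i. i \<in> I \<Longrightarrow> t i \<in> I" using t by (simp add: permutes_in_image)
  have meas: "(\<lambda>x. restrict (x \<circ> t) I) \<in> measurable (\<Pi>\<^sub>M i\<in>I. M) (\<Pi>\<^sub>M i\<in>I. M)"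
    by (rule measurable_restrict) (auto intro!: measurable_component_singleton tI)
  show ?thesis
  proof (rule PiM_eqI[OF fin])
    fix A assume A: "\<And>i. i \<in> I \<Longrightarrow> A i \<in> sets M"
    have invt: "\<And>j. j \<in> I \<Longrightarrow> t (inv t j) = j" "\<And>i. inv t (t i) = i"
      using t by (auto simp: permutes_inverses)
    have invI: "\<And>j. j \<in> I \<Longrightarrow> inv t j \<in> I"
      using t by (simp add: permutes_in_image permutes_inv)
    have pre: "(\<lambda>x. restrict (x \<circ> t) I) -` Pi\<^sub>E I A \<inter> space (\<Pi>\<^sub>M i\<in>I. M) = Pi\<^sub>E I (\<lambda>j. A (inv t j))"
      using A[THEN sets.sets_into_space] tI invt invI
      by (auto simp: space_PiM PiE_iff Pi_iff) (metis subsetD)+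
    have "emeasure (distr (\<Pi>\<^sub>M i\<in>I. M) (\<Pi>\<^sub>M i\<in>I. M) (\<lambda>x. restrict (x \<circ> t) I)) (Pi\<^sub>E I A)
        = emeasure (\<Pi>\<^sub>M i\<in>I. M) (Pi\<^sub>E I (\<lambda>j. A (inv t j)))"
      using A meas by (subst emeasure_distr) (auto simp: pre intro!: sets_PiM_I_finite fin)
    also have "\<dots> = (\<Prod>j\<in>I. emeasure M (A (inv t j)))"
      using A fin invI by (intro emeasure_PiM) auto
    also have "\<dots> = (\<Prod>i\<in>I. emeasure M (A i))"
      using t by (intro prod.reindex_bij_betw) (simp add: permutes_imp_bij permutes_inv)
    finally show "emeasure (distr (\<Pi>\<^sub>M i\<in>I. M) (\<Pi>\<^sub>M i\<in>I. M) (\<lambda>x. restrict (x \<circ> t) I)) (Pi\<^sub>E I A)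
        = (\<Prod>i\<in>I. emeasure M (A i))" .
  qed simp
qed

lemma sigma_finite_photon_measure: "sigma_finite_measure photon_measure"
proof -
  interpret sigma_finite_measure "count_space {1::nat, 2}"
    by (rule sigma_finite_measure_count_space_finite) simp
  interpret pair_sigma_finite lborel "count_space {1::nat, 2}" ..
  show ?thesis unfolding photon_measure_def by (rule P.sigma_finite_measure_axioms)
qed

interpretation photons: product_sigma_finite "\<lambda>_::nat. photon_measure"
  by (simp add: product_sigma_finite_def sigma_finite_photon_measure)

lemma sigma_finite_photons_measure: "sigma_finite_measure (photons_measure n)"
  by (rule photons.sigma_finite) simp

lemma measurable_fst_photon[measurable]: "fst \<in> measurable photon_measure (borel :: (real^3) measure)"
  using measurable_fst[of lborel "count_space {1, 2}"] by (simp add: photon_measure_def)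

lemma measurable_drop_at:
  assumes "i \<le> N"
  shows "drop_at N i \<in> measurable (photons_measure (Suc N)) (photons_measure N)"
proof -
  have "(\<lambda>ks. drop_at N i ks j) \<in> measurable (photons_measure (Suc N)) photon_measure" if "j < N" for j
    using that by (auto simp: drop_at_def intro!: measurable_component_singleton)
  moreover have "drop_at N i ks \<in> (\<Pi>\<^sub>E j\<in>{..<N}. space photon_measure)"
    if "ks \<in> space (photons_measure (Suc N))" for ks
    using that by (auto simp: drop_at_def space_PiM PiE_iff extensional_def)
  ultimately show ?thesis
    by (intro measurable_PiM_single') auto
qed

text \<open>Listing the photons kept by \<^const>\<open>drop_at\<close> first and the removed photon \<open>i\<close> last.\<close>
lemma drop_at_reorder_permutes:
  assumes "i \<le> N"
  shows "(\<lambda>j. if j < i then j else if j < N then Suc j else if j = N then i else j) permutes {..<Suc N}"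
    (is "?t permutes _")
proof -
  have inj: "inj_on ?t {..<Suc N}"
    using assms by (auto simp: inj_on_def split: if_splits)
  have "?t ` {..<Suc N} \<subseteq> {..<Suc N}" using assms by auto
  then have "?t ` {..<Suc N} = {..<Suc N}" using endo_inj_surj[OF _ _ inj] by simp
  with inj show ?thesis
    by (intro bij_imp_permutes) (auto simp: bij_betw_def)
qed

lemma nn_integral_photons_remove_photon:
  assumes iN: "i \<le> N"
    and G: "(\<lambda>(k, ks). G k ks) \<in> borel_measurable (photon_measure \<Otimes>\<^sub>M photons_measure N)"
  shows "(\<integral>\<^sup>+ks. G (ks i) (drop_at N i ks) \<partial>photons_measure (Suc N))
       = (\<integral>\<^sup>+k. \<integral>\<^sup>+ks. G k ks \<partial>photons_measure N \<partial>photon_measure)"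
proof -
  define t where "t j = (if j < i then j else if j < N then Suc j else if j = N then i else j)" for j
  have t: "t permutes {..<Suc N}" unfolding t_def using drop_at_reorder_permutes[OF iN] .
  define F where "F x = G (x N) (restrict x {..<N})" for x :: photons
  have Fm: "F \<in> borel_measurable (photons_measure (Suc N))"
  proof -
    have "(\<lambda>x. (x N, restrict x {..<N})) \<in> measurable (photons_measure (Suc N)) (photon_measure \<Otimes>\<^sub>M photons_measure N)"
      by (intro measurable_Pair measurable_component_singleton measurable_restrict_subset) auto
    from measurable_comp[OF this G] show ?thesis by (simp add: F_def[abs_def] comp_def)
  qed
  have G_eq: "G (ks i) (drop_at N i ks) = F (restrict (ks \<circ> t) {..<Suc N})" for ks
  proof -
    have "restrict (restrict (ks \<circ> t) {..<Suc N}) {..<N} = drop_at N i ks"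
      unfolding drop_at_def t_def using iN by (auto simp: restrict_def fun_eq_iff)
    moreover have "restrict (ks \<circ> t) {..<Suc N} N = ks i" unfolding t_def using iN by simp
    ultimately show ?thesis unfolding F_def by simp
  qed
  have mt: "(\<lambda>x. restrict (x \<circ> t) {..<Suc N}) \<in> measurable (photons_measure (Suc N)) (photons_measure (Suc N))"
    using permutes_in_image[OF t]
    by (intro measurable_restrict) (auto intro!: measurable_component_singleton)
  have "(\<integral>\<^sup>+ks. G (ks i) (drop_at N i ks) \<partial>photons_measure (Suc N))
      = (\<integral>\<^sup>+x. F x \<partial>distr (photons_measure (Suc N)) (photons_measure (Suc N)) (\<lambda>x. restrict (x \<circ> t) {..<Suc N}))"
    unfolding G_eq by (rule nn_integral_distr[symmetric, OF mt]) (simp add: Fm)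
  also have "\<dots> = (\<integral>\<^sup>+x. F x \<partial>photons_measure (Suc N))"
    by (simp add: distr_PiM_permutes[OF sigma_finite_photon_measure _ t])
  also have "\<dots> = (\<integral>\<^sup>+k. (\<integral>\<^sup>+ks. F (ks(N := k)) \<partial>photons_measure N) \<partial>photon_measure)"
    using photons.product_nn_integral_insert_rev[of "{..<N}" N F] Fm by (simp add: lessThan_Suc)
  also have "\<dots> = (\<integral>\<^sup>+k. \<integral>\<^sup>+ks. G k ks \<partial>photons_measure N \<partial>photon_measure)"
  proof (intro nn_integral_cong)
    fix k ks assume "ks \<in> space (photons_measure N)"
    then have "restrict (ks(N := k)) {..<N} = ks"
      by (auto simp: space_PiM PiE_def extensional_def restrict_def fun_eq_iff)
    then show "F (ks(N := k)) = G k ks" by (simp add: F_def)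
  qed
  finally show ?thesis .
qed

lemma measurable_sector_photon:
  assumes "i < N"
  shows "(\<lambda>z. snd z i) \<in> measurable (sector_measure N) photon_measure"
  unfolding sector_measure_def using assms
  by (intro measurable_compose[OF measurable_snd] measurable_component_singleton) auto

lemma measurable_remove_photon:
  assumes "i \<le> N"
  shows "(\<lambda>(P, ks). (ks i, (P + fst (ks i), drop_at N i ks)))
           \<in> measurable (sector_measure (Suc N)) (photon_measure \<Otimes>\<^sub>M sector_measure N)"
proof -
  have ki: "(\<lambda>z. snd z i) \<in> measurable (lborel \<Otimes>\<^sub>M photons_measure (Suc N)) photon_measure"
    using measurable_sector_photon[of i "Suc N"] assms by (simp add: sector_measure_def)
  have "(\<lambda>z. fst z + fst (snd z i)) \<in> borel_measurable (lborel \<Otimes>\<^sub>M photons_measure (Suc N))"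
    using measurable_compose[OF ki measurable_fst_photon] by (intro borel_measurable_add) (auto simp: measurable_fst'')
  moreover have "(\<lambda>z. drop_at N i (snd z)) \<in> measurable (lborel \<Otimes>\<^sub>M photons_measure (Suc N)) (photons_measure N)"
    by (rule measurable_compose[OF measurable_snd measurable_drop_at[OF assms]])
  ultimately have "(\<lambda>z. (snd z i, (fst z + fst (snd z i), drop_at N i (snd z))))
      \<in> measurable (lborel \<Otimes>\<^sub>M photons_measure (Suc N)) (photon_measure \<Otimes>\<^sub>M (lborel \<Otimes>\<^sub>M photons_measure N))"
    using ki by (intro measurable_Pair) auto
  then show ?thesis by (simp add: sector_measure_def case_prod_beta')
qed

lemma measurable_transfer_momentum:
  "(\<lambda>((P, k), ks). (k, (P + fst k, ks)))
    \<in> measurable ((lborel \<Otimes>\<^sub>M photon_measure) \<Otimes>\<^sub>M photons_measure N) (photon_measure \<Otimes>\<^sub>M sector_measure N)"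
proof -
  have k: "(\<lambda>z. snd (fst z)) \<in> measurable ((lborel \<Otimes>\<^sub>M photon_measure) \<Otimes>\<^sub>M photons_measure N) photon_measure"
    by (intro measurable_compose[OF measurable_fst] measurable_snd)
  have "(\<lambda>z. fst (fst z) + fst (snd (fst z))) \<in> borel_measurable ((lborel \<Otimes>\<^sub>M photon_measure) \<Otimes>\<^sub>M photons_measure N)"
    using measurable_compose[OF k measurable_fst_photon] measurable_compose[OF measurable_fst measurable_fst]
    by (intro borel_measurable_add) (auto simp: measurable_fst'')
  with k show ?thesis
    unfolding sector_measure_def case_prod_beta' by (intro measurable_Pair measurable_snd) auto
qed

lemma nn_integral_sector_translate:
  assumes f: "f \<in> borel_measurable (sector_measure N)"
  shows "(\<integral>\<^sup>+P. \<integral>\<^sup>+ks. f (P + c, ks) \<partial>photons_measure N \<partial>lborel) = integral\<^sup>N (sector_measure N) f"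
proof -
  interpret sigma_finite_measure "photons_measure N" by (rule sigma_finite_photons_measure)
  have f': "f \<in> borel_measurable (lborel \<Otimes>\<^sub>M photons_measure N)"
    using f by (simp add: sector_measure_def)
  have Q: "(\<lambda>P. \<integral>\<^sup>+ks. f (P, ks) \<partial>photons_measure N) \<in> borel_measurable lborel"
    using borel_measurable_nn_integral_fst[OF f'] by simp
  have "(\<integral>\<^sup>+P. \<integral>\<^sup>+ks. f (P + c, ks) \<partial>photons_measure N \<partial>lborel)
      = (\<integral>\<^sup>+P. (\<lambda>P. \<integral>\<^sup>+ks. f (P, ks) \<partial>photons_measure N) (c + P) \<partial>lborel)"
    by (simp add: add.commute)
  also have "\<dots> = (\<integral>\<^sup>+P. \<integral>\<^sup>+ks. f (P, ks) \<partial>photons_measure N \<partial>distr lborel borel ((+) c))"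
    using Q by (intro nn_integral_distr[symmetric]) auto
  also have "\<dots> = integral\<^sup>N (sector_measure N) f"
    unfolding lborel_distr_plus sector_measure_def nn_integral_fst[OF f'] by simp
  finally show ?thesis .
qed

lemma nn_integral_sector_remove_photon:
  assumes iN: "i \<le> N"
    and f: "(\<lambda>(k, z). f k z) \<in> borel_measurable (photon_measure \<Otimes>\<^sub>M sector_measure N)"
  shows "(\<integral>\<^sup>+(P, ks). f (ks i) (P + fst (ks i), drop_at N i ks) \<partial>sector_measure (Suc N))
       = (\<integral>\<^sup>+k. \<integral>\<^sup>+z. f k z \<partial>sector_measure N \<partial>photon_measure)"
proof -
  interpret PS: sigma_finite_measure "photons_measure (Suc N)" by (rule sigma_finite_photons_measure)
  interpret PN: sigma_finite_measure "photons_measure N" by (rule sigma_finite_photons_measure)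
  interpret Ph: sigma_finite_measure photon_measure by (rule sigma_finite_photon_measure)
  interpret LPh: pair_sigma_finite lborel photon_measure ..
  have f_shift: "(\<lambda>((P, k), ks). f k (P + fst k, ks)) \<in> borel_measurable ((lborel \<Otimes>\<^sub>M photon_measure) \<Otimes>\<^sub>M photons_measure N)"
    using measurable_comp[OF measurable_transfer_momentum f] by (simp add: comp_def case_prod_beta')
  have f_removed: "(\<lambda>(P, ks). f (ks i) (P + fst (ks i), drop_at N i ks)) \<in> borel_measurable (lborel \<Otimes>\<^sub>M photons_measure (Suc N))"
    using measurable_comp[OF measurable_remove_photon[OF iN] f] by (simp add: comp_def case_prod_beta' sector_measure_def)
  have f_k: "f k \<in> borel_measurable (sector_measure N)" if "k \<in> space photon_measure" for k
    using measurable_compose_Pair1[OF that f] by simp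
  have "(\<integral>\<^sup>+(P, ks). f (ks i) (P + fst (ks i), drop_at N i ks) \<partial>sector_measure (Suc N))
      = (\<integral>\<^sup>+P. \<integral>\<^sup>+ks. f (ks i) (P + fst (ks i), drop_at N i ks) \<partial>photons_measure (Suc N) \<partial>lborel)"
    unfolding sector_measure_def using PS.nn_integral_fst[OF f_removed] by simp
  also have "\<dots> = (\<integral>\<^sup>+P. \<integral>\<^sup>+k. \<integral>\<^sup>+ks. f k (P + fst k, ks) \<partial>photons_measure N \<partial>photon_measure \<partial>lborel)"
  proof (intro nn_integral_cong nn_integral_photons_remove_photon[OF iN])
    fix P :: "real^3"
    have "(\<lambda>(k, ks). ((P, k), ks)) \<in> measurable (photon_measure \<Otimes>\<^sub>M photons_measure N) ((lborel \<Otimes>\<^sub>M photon_measure) \<Otimes>\<^sub>M photons_measure N)"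
      by measurable
    from measurable_comp[OF this f_shift]
    show "(\<lambda>(k, ks). f k (P + fst k, ks)) \<in> borel_measurable (photon_measure \<Otimes>\<^sub>M photons_measure N)"
      by (simp add: comp_def case_prod_beta')
  qed
  also have "\<dots> = (\<integral>\<^sup>+k. \<integral>\<^sup>+P. \<integral>\<^sup>+ks. f k (P + fst k, ks) \<partial>photons_measure N \<partial>lborel \<partial>photon_measure)"
    using PN.borel_measurable_nn_integral_fst[OF f_shift]
    by (intro LPh.Fubini'[symmetric]) (simp add: case_prod_beta')
  also have "\<dots> = (\<integral>\<^sup>+k. \<integral>\<^sup>+z. f k z \<partial>sector_measure N \<partial>photon_measure)"
    by (intro nn_integral_cong nn_integral_sector_translate f_k)
  finally show ?thesis .
qed


lemma measurable_photon_sector_pair: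
  fixes c :: "real^3 \<Rightarrow> real" and G :: "(real^3) \<times> photons \<Rightarrow> real"
  assumes c: "c \<in> borel_measurable (borel :: (real^3) measure)" and G: "G \<in> borel_measurable (sector_measure N)"
  shows "(\<lambda>(k, z). c (fst k) * G z) \<in> borel_measurable (photon_measure \<Otimes>\<^sub>M sector_measure N)"
proof -
  have "(\<lambda>p. c (fst (fst p))) \<in> borel_measurable (photon_measure \<Otimes>\<^sub>M sector_measure N)"
    using measurable_compose[OF measurable_fst measurable_compose[OF measurable_fst_photon c]] .
  moreover have "(\<lambda>p. G (snd p)) \<in> borel_measurable (photon_measure \<Otimes>\<^sub>M sector_measure N)"
    using measurable_compose[OF measurable_snd G] .
  ultimately show ?thesis by (simp add: case_prod_beta')
qed

text \<open>The shape of the kernels of \<^const>\<open>Dstar\<close> and \<^const>\<open>Estar\<close>, with the form factor replaced by \<open>c\<close>.\<close>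
definition photon_removal :: "(real^3 \<Rightarrow> real) \<Rightarrow> nat \<Rightarrow> nat \<Rightarrow> ((real^3) \<times> photons \<Rightarrow> real) \<Rightarrow> (real^3) \<times> photons \<Rightarrow> real" where
  "photon_removal c N i G = (\<lambda>(P, ks). c (fst (ks i)) * G (P + fst (ks i), drop_at N i ks))"

lemma photon_removal_nonneg:
  "(\<And>k. 0 \<le> c k) \<Longrightarrow> (\<And>z. 0 \<le> G z) \<Longrightarrow> 0 \<le> photon_removal c N i G z"
  by (simp add: photon_removal_def case_prod_beta')

lemma measurable_photon_removal:
  assumes "i \<le> N" and "c \<in> borel_measurable borel" and "G \<in> borel_measurable (sector_measure N)"
  shows "photon_removal c N i G \<in> borel_measurable (sector_measure (Suc N))"
  using measurable_comp[OF measurable_remove_photon[OF assms(1)] measurable_photon_sector_pair[OF assms(2,3)]]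
  by (simp add: photon_removal_def comp_def case_prod_beta')

lemma nn_integral_photon_removal:
  assumes "i \<le> N" and c: "c \<in> borel_measurable borel" and G: "G \<in> borel_measurable (sector_measure N)"
    and "\<And>k. 0 \<le> c k" and "\<And>z. 0 \<le> G z"
  shows "(\<integral>\<^sup>+z. photon_removal c N i G z \<partial>sector_measure (Suc N))
       = (\<integral>\<^sup>+k. c (fst k) \<partial>photon_measure) * (\<integral>\<^sup>+z. G z \<partial>sector_measure N)"
proof -
  have cm: "(\<lambda>k. ennreal (c (fst k))) \<in> borel_measurable photon_measure"
    using measurable_compose[OF measurable_fst_photon c] by simp
  have "(\<lambda>(k, z). ennreal (c (fst k) * G z)) \<in> borel_measurable (photon_measure \<Otimes>\<^sub>M sector_measure N)"
    using measurable_photon_sector_pair[OF c G] by (simp add: case_prod_beta')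
  from nn_integral_sector_remove_photon[OF assms(1) this]
  have "(\<integral>\<^sup>+z. photon_removal c N i G z \<partial>sector_measure (Suc N))
      = (\<integral>\<^sup>+k. \<integral>\<^sup>+z. ennreal (c (fst k)) * ennreal (G z) \<partial>sector_measure N \<partial>photon_measure)"
    using assms(4,5) by (simp add: photon_removal_def case_prod_beta' ennreal_mult)
  also have "\<dots> = (\<integral>\<^sup>+k. ennreal (c (fst k)) * (\<integral>\<^sup>+z. G z \<partial>sector_measure N) \<partial>photon_measure)"
    using G by (intro nn_integral_cong nn_integral_cmult) simp
  also have "\<dots> = (\<integral>\<^sup>+k. c (fst k) \<partial>photon_measure) * (\<integral>\<^sup>+z. G z \<partial>sector_measure N)"
    by (rule nn_integral_multc[OF cm])
  finally show ?thesis .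
qed

lemma nn_integral_photon_fst:
  assumes f: "f \<in> borel_measurable (lborel :: (real^3) measure)"
  shows "(\<integral>\<^sup>+k. f (fst k) \<partial>photon_measure) = 2 * (\<integral>\<^sup>+x. f x \<partial>lborel)"
proof -
  interpret C: sigma_finite_measure "count_space {1::nat, 2}"
    by (rule sigma_finite_measure_count_space_finite) simp
  have fk: "(\<lambda>k. f (fst k)) \<in> borel_measurable (lborel \<Otimes>\<^sub>M count_space {1::nat, 2})"
    using f by (rule measurable_compose[OF measurable_fst])
  have "(\<integral>\<^sup>+k. f (fst k) \<partial>photon_measure) = (\<integral>\<^sup>+x. \<integral>\<^sup>+l. f x \<partial>count_space {1::nat, 2} \<partial>lborel)"
    unfolding photon_measure_def using C.nn_integral_fst[OF fk] by simp
  also have "\<dots> = (\<integral>\<^sup>+x. 2 * f x \<partial>lborel)"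
    by (intro nn_integral_cong) (simp add: nn_integral_count_space_finite mult.commute)
  also have "\<dots> = 2 * (\<integral>\<^sup>+x. f x \<partial>lborel)"
    using f by (rule nn_integral_cmult)
  finally show ?thesis .
qed

section \<open>Integrals of the form factors\<close>

lemma borel_measurable_chi[measurable]: "chi \<Lambda> \<in> borel_measurable borel"
  unfolding chi_def[abs_def] by measurable

lemma chi_eq_indicator: "chi \<Lambda> k = indicator (cball 0 \<Lambda>) k"
  by (simp add: chi_def indicator_def dist_norm)

lemma chi_cases: "chi \<Lambda> k = 0 \<or> chi \<Lambda> k = 1"
  by (simp add: chi_def)

lemma chi_nonneg[simp]: "0 \<le> chi \<Lambda> k"
  by (simp add: chi_def)

lemma emeasure_lborel_cball_3:
  "0 \<le> r \<Longrightarrow> emeasure lborel (cball (0::real^3) r) = ennreal (4 / 3 * pi * r ^ 3)"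
  by (simp add: emeasure_cball unit_ball_vol_3)

lemma nn_integral_chi_photon:
  assumes "0 < \<Lambda>"
  shows "(\<integral>\<^sup>+k. chi \<Lambda> (fst k) \<partial>photon_measure) = ennreal (8 / 3 * pi * \<Lambda> ^ 3)"
proof -
  have "(\<integral>\<^sup>+k. chi \<Lambda> (fst k) \<partial>photon_measure) = 2 * (\<integral>\<^sup>+x. chi \<Lambda> x \<partial>lborel)"
    by (rule nn_integral_photon_fst) simp
  also have "(\<integral>\<^sup>+x. chi \<Lambda> x \<partial>lborel) = emeasure lborel (cball (0::real^3) \<Lambda>)"
    by (simp add: chi_eq_indicator ennreal_indicator)
  also have "\<dots> = ennreal (4 / 3 * pi * \<Lambda> ^ 3)"
    using assms by (simp add: emeasure_lborel_cball_3)
  also have "2 * \<dots> = ennreal (2 * (4 / 3 * pi * \<Lambda> ^ 3))"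
    using ennreal_mult'[of 2 "4 / 3 * pi * \<Lambda> ^ 3"] by simp
  also have "2 * (4 / 3 * pi * \<Lambda> ^ 3) = 8 / 3 * pi * \<Lambda> ^ 3"
    by simp
  finally show ?thesis .
qed

definition G_majorant :: "real \<Rightarrow> real^3 \<Rightarrow> real" where
  "G_majorant \<Lambda> k = chi \<Lambda> k / (2 * pi * sqrt (norm k))"

definition H_majorant :: "real \<Rightarrow> real^3 \<Rightarrow> real" where
  "H_majorant \<Lambda> k = chi \<Lambda> k * sqrt (norm k) / (2 * pi)"

definition cutoff_weight :: "real \<Rightarrow> real^3 \<Rightarrow> real" where
  "cutoff_weight \<Lambda> k = chi \<Lambda> k / (4 * pi\<^sup>2 * (norm k)\<^sup>2)"

lemma G_majorant_nonneg[simp]: "0 \<le> G_majorant \<Lambda> k"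
  by (simp add: G_majorant_def)

lemma H_majorant_nonneg[simp]: "0 \<le> H_majorant \<Lambda> k"
  by (simp add: H_majorant_def)

lemma cutoff_weight_nonneg[simp]: "0 \<le> cutoff_weight \<Lambda> k"
  by (simp add: cutoff_weight_def)

lemma borel_measurable_cutoff_weight[measurable]: "cutoff_weight \<Lambda> \<in> borel_measurable borel"
  unfolding cutoff_weight_def[abs_def] by measurable

lemma G_majorant_sq: "(G_majorant \<Lambda> k)\<^sup>2 = norm k * cutoff_weight \<Lambda> k"
  using chi_cases[of \<Lambda> k]
  by (cases "k = 0") (auto simp: G_majorant_def cutoff_weight_def power_divide power_mult_distrib power2_eq_square)

lemma H_majorant_sq: "(H_majorant \<Lambda> k)\<^sup>2 = chi \<Lambda> k * norm k / (4 * pi\<^sup>2)"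
  using chi_cases[of \<Lambda> k] by (auto simp: H_majorant_def power_divide power_mult_distrib)

lemma exists_dyadic_scale:
  fixes t \<Lambda> :: real
  assumes "0 < t" "t \<le> \<Lambda>"
  obtains j where "t \<le> \<Lambda> / 2 ^ j" "1 / t\<^sup>2 \<le> 4 ^ Suc j / \<Lambda>\<^sup>2"
proof -
  have ex: "\<exists>n. \<Lambda> / t < 2 ^ n" by (rule real_arch_pow) simp
  define J where "J = (LEAST n. \<Lambda> / t < 2 ^ n)"
  have J: "\<Lambda> / t < 2 ^ J" unfolding J_def by (rule LeastI_ex[OF ex])
  have "J \<noteq> 0"
  proof
    assume "J = 0"
    with J assms show False by simp
  qed
  then obtain j where Jj: "J = Suc j" by (cases J) auto
  have "\<not> \<Lambda> / t < 2 ^ j" using Jj unfolding J_def by (metis lessI not_less_Least)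
  then have "t \<le> \<Lambda> / 2 ^ j" using assms by (simp add: field_simps)
  moreover have "1 / t\<^sup>2 \<le> 4 ^ Suc j / \<Lambda>\<^sup>2"
  proof -
    have "\<Lambda>\<^sup>2 \<le> (2 ^ Suc j * t)\<^sup>2"
      using J Jj assms by (intro power_mono) (auto simp: field_simps)
    also have "\<dots> = 4 ^ Suc j * t\<^sup>2"
    proof -
      have "(4::real) ^ Suc j = 2 ^ Suc j * 2 ^ Suc j" by (simp flip: power_mult_distrib)
      then show ?thesis by (simp add: power2_eq_square algebra_simps)
    qed
    finally show ?thesis using assms by (simp add: field_simps)
  qed
  ultimately show ?thesis by (rule that)
qed

lemma cutoff_weight_le_dyadic_sum:
  assumes "0 < \<Lambda>"
  shows "ennreal (cutoff_weight \<Lambda> k)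
    \<le> (\<Sum>j. ennreal (4 ^ Suc j / (4 * pi\<^sup>2 * \<Lambda>\<^sup>2)) * indicator (cball (0::real^3) (\<Lambda> / 2 ^ j)) k)"
proof (cases "k = 0 \<or> norm k > \<Lambda>")
  case True
  then show ?thesis by (auto simp: cutoff_weight_def chi_def)
next
  case False
  then have t: "0 < norm k" "norm k \<le> \<Lambda>" by auto
  obtain j where j: "norm k \<le> \<Lambda> / 2 ^ j" "1 / (norm k)\<^sup>2 \<le> 4 ^ Suc j / \<Lambda>\<^sup>2"
    using exists_dyadic_scale[OF t] .
  have "cutoff_weight \<Lambda> k = (1 / (norm k)\<^sup>2) / (4 * pi\<^sup>2)"
    using t by (simp add: cutoff_weight_def chi_def)
  also have "\<dots> \<le> (4 ^ Suc j / \<Lambda>\<^sup>2) / (4 * pi\<^sup>2)"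
    using j(2) by (rule divide_right_mono) simp
  also have "\<dots> = 4 ^ Suc j / (4 * pi\<^sup>2 * \<Lambda>\<^sup>2)"
    by simp
  finally have "ennreal (cutoff_weight \<Lambda> k)
      \<le> ennreal (4 ^ Suc j / (4 * pi\<^sup>2 * \<Lambda>\<^sup>2)) * indicator (cball (0::real^3) (\<Lambda> / 2 ^ j)) k"
    using j(1) by (simp add: dist_norm)
  also have "\<dots> \<le> (\<Sum>j. ennreal (4 ^ Suc j / (4 * pi\<^sup>2 * \<Lambda>\<^sup>2)) * indicator (cball (0::real^3) (\<Lambda> / 2 ^ j)) k)"
    using sum_le_suminf[OF summableI, of "{j}"] by simp
  finally show ?thesis .
qed

lemma nn_integral_cutoff_weight_lborel_le:
  assumes L: "0 < \<Lambda>"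
  shows "(\<integral>\<^sup>+k. cutoff_weight \<Lambda> k \<partial>lborel) \<le> ennreal \<Lambda>"
proof -
  define a where "a j = 4 ^ Suc j / (4 * pi\<^sup>2 * \<Lambda>\<^sup>2)" for j :: nat
  have a_ball: "a j * (4 / 3 * pi * (\<Lambda> / 2 ^ j) ^ 3) = 4 * \<Lambda> / (3 * pi) * (1/2) ^ j" for j
  proof -
    have "(4::real) ^ j = 2 ^ j * 2 ^ j" by (simp flip: power_mult_distrib)
    then show ?thesis
      using L by (simp add: a_def power_divide power_one_over field_simps power2_eq_square power3_eq_cube)
  qed
  have "(\<integral>\<^sup>+k. cutoff_weight \<Lambda> k \<partial>lborel)
      \<le> (\<integral>\<^sup>+k. (\<Sum>j. ennreal (a j) * indicator (cball (0::real^3) (\<Lambda> / 2 ^ j)) k) \<partial>lborel)"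
    unfolding a_def by (intro nn_integral_mono cutoff_weight_le_dyadic_sum L)
  also have "\<dots> = (\<Sum>j. \<integral>\<^sup>+k. ennreal (a j) * indicator (cball (0::real^3) (\<Lambda> / 2 ^ j)) k \<partial>lborel)"
    by (intro nn_integral_suminf borel_measurable_times_ennreal) (auto intro!: borel_measurable_indicator borel_closed)
  also have "\<dots> = (\<Sum>j. ennreal (4 * \<Lambda> / (3 * pi) * (1/2) ^ j))"
  proof (intro suminf_cong)
    fix j :: nat
    have r: "0 \<le> \<Lambda> / 2 ^ j" using L by simp
    have a: "0 \<le> a j" by (simp add: a_def)
    have "(\<integral>\<^sup>+k. ennreal (a j) * indicator (cball (0::real^3) (\<Lambda> / 2 ^ j)) k \<partial>lborel)
        = ennreal (a j) * ennreal (4 / 3 * pi * (\<Lambda> / 2 ^ j) ^ 3)"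
      using r by (simp add: nn_integral_cmult_indicator emeasure_lborel_cball_3)
    also have "\<dots> = ennreal (a j * (4 / 3 * pi * (\<Lambda> / 2 ^ j) ^ 3))"
      using a r by (intro ennreal_mult[symmetric]) auto
    also have "\<dots> = ennreal (4 * \<Lambda> / (3 * pi) * (1/2) ^ j)"
      unfolding a_ball ..
    finally show "(\<integral>\<^sup>+k. ennreal (a j) * indicator (cball (0::real^3) (\<Lambda> / 2 ^ j)) k \<partial>lborel)
        = ennreal (4 * \<Lambda> / (3 * pi) * (1/2) ^ j)" .
  qed
  also have "\<dots> = ennreal (\<Sum>j. 4 * \<Lambda> / (3 * pi) * (1/2) ^ j)"
    using L by (intro suminf_ennreal2) auto
  also have "(\<Sum>j. 4 * \<Lambda> / (3 * pi) * (1/2::real) ^ j) = 8 * \<Lambda> / (3 * pi)"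
    by (subst suminf_mult) (auto simp: suminf_geometric)
  also have "ennreal (8 * \<Lambda> / (3 * pi)) \<le> ennreal \<Lambda>"
    using L pi_gt3 by (intro ennreal_leI) (simp add: field_simps)
  finally show ?thesis .
qed

lemma nn_integral_cutoff_weight_photon_le:
  assumes "0 < \<Lambda>"
  shows "(\<integral>\<^sup>+k. cutoff_weight \<Lambda> (fst k) \<partial>photon_measure) \<le> ennreal (2 * \<Lambda>)"
proof -
  have "(\<integral>\<^sup>+k. cutoff_weight \<Lambda> (fst k) \<partial>photon_measure) = 2 * (\<integral>\<^sup>+x. cutoff_weight \<Lambda> x \<partial>lborel)"
    by (rule nn_integral_photon_fst) simp
  also have "\<dots> \<le> 2 * ennreal \<Lambda>"
    using nn_integral_cutoff_weight_lborel_le[OF assms] by (rule mult_left_mono) simp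
  finally show ?thesis using assms by (simp add: ennreal_mult)
qed


section \<open>Pointwise bounds on the creation operators\<close>

lemma norm_vec_smult: "norm (c *s (x::complex^'n)) = cmod c * norm x"
proof -
  have "norm (c *s x) = L2_set (\<lambda>i. cmod c * norm (x $ i)) UNIV"
    by (simp add: norm_vec_def norm_mult)
  also have "\<dots> = cmod c * L2_set (\<lambda>i. norm (x $ i)) UNIV"
    by (rule L2_set_right_distrib[symmetric]) simp
  finally show ?thesis by (simp add: norm_vec_def)
qed

lemma cmod_cinner2_le: "cmod (cinner2 u v) \<le> norm u * norm v"
proof -
  have "cmod (cinner2 u v) \<le> (\<Sum>s\<in>UNIV. cmod (cnj (u $ s) * v $ s))"
    unfolding cinner2_def by (rule norm_sum)
  also have "\<dots> = (\<Sum>s\<in>UNIV. \<bar>cmod (u $ s)\<bar> * \<bar>cmod (v $ s)\<bar>)"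
    by (simp add: norm_mult)
  also have "\<dots> \<le> L2_set (\<lambda>s. cmod (u $ s)) UNIV * L2_set (\<lambda>s. cmod (v $ s)) UNIV"
    by (rule L2_set_mult_ineq)
  finally show ?thesis by (simp add: norm_vec_def)
qed

lemma norm_pauli_mult: "norm (pauli j *v x) = norm x"
proof -
  have mv: "(A *v x) $ r = A $ r $ 1 * x $ 1 + A $ r $ 2 * x $ 2" for A :: "complex^2^2" and r
    by (simp add: matrix_vector_mult_def sum_2)
  have norm2: "norm (y::complex^2) = sqrt ((cmod (y $ 1))\<^sup>2 + (cmod (y $ 2))\<^sup>2)" for y
    by (simp add: norm_vec_def L2_set_def sum_2)
  consider "j = 1" | "j = 2" | "j \<noteq> 1" "j \<noteq> 2" by blast
  then show ?thesis
    by cases (simp_all add: pauli_def mv norm2 norm_mult add.commute)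
qed

lemma abs_Gv_le:
  assumes "pol_ok eps" "l \<in> {1, 2}"
  shows "\<bar>Gv eps \<Lambda> l k $ j\<bar> \<le> G_majorant \<Lambda> k"
proof (cases "k = 0")
  case True
  then show ?thesis by (simp add: Gv_def G_majorant_def)
next
  case False
  then have "norm (eps l k) = 1" using assms by (auto simp: pol_ok_def)
  then have "\<bar>eps l k $ j\<bar> \<le> 1" using component_le_norm_cart[of "eps l k" j] by simp
  have "\<bar>Gv eps \<Lambda> l k $ j\<bar> = \<bar>chi \<Lambda> k / (2 * pi * sqrt (norm k))\<bar> * \<bar>eps l k $ j\<bar>"
    by (simp add: Gv_def abs_mult)
  also have "\<dots> \<le> \<bar>chi \<Lambda> k / (2 * pi * sqrt (norm k))\<bar> * 1"
    using \<open>\<bar>eps l k $ j\<bar> \<le> 1\<close> by (rule mult_left_mono) simp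
  also have "\<dots> = G_majorant \<Lambda> k"
    by (simp add: G_majorant_def)
  finally show ?thesis .
qed

lemma cmod_Hv_le:
  assumes "pol_ok eps" "l \<in> {1, 2}"
  shows "cmod (Hv eps \<Lambda> l k $ j) \<le> H_majorant \<Lambda> k"
proof (cases "k = 0")
  case True
  then show ?thesis by (simp add: Hv_def H_majorant_def)
next
  case False
  then have unit: "norm (eps l k) = 1" using assms by (auto simp: pol_ok_def)
  have "(norm (cross3 k (eps l k)))\<^sup>2 \<le> (norm k * norm (eps l k))\<^sup>2"
    using norm_cross_dot[of k "eps l k"] zero_le_power2[of "k \<bullet> eps l k"] by linarith
  then have "(norm (cross3 k (eps l k)))\<^sup>2 \<le> (norm k)\<^sup>2"
    by (simp only: unit mult_1_right)
  then have "norm (cross3 k (eps l k)) \<le> norm k"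
    by (rule power2_le_imp_le) (rule norm_ge_zero)
  then have "\<bar>cross3 k (eps l k) $ j\<bar> \<le> norm k"
    using component_le_norm_cart[of "cross3 k (eps l k)" j] by simp
  have "cmod (Hv eps \<Lambda> l k $ j) = \<bar>chi \<Lambda> k / (2 * pi * sqrt (norm k))\<bar> * \<bar>cross3 k (eps l k) $ j\<bar>"
    by (simp add: Hv_def norm_mult norm_divide abs_mult)
  also have "\<dots> \<le> \<bar>chi \<Lambda> k / (2 * pi * sqrt (norm k))\<bar> * norm k"
    using \<open>\<bar>cross3 k (eps l k) $ j\<bar> \<le> norm k\<close> by (rule mult_left_mono) simp
  also have "\<dots> = H_majorant \<Lambda> k"
  proof -
    have "norm k = sqrt (norm k) * sqrt (norm k)" by simp
    then show ?thesis using False by (simp add: H_majorant_def field_simps)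
  qed
  finally show ?thesis .
qed

definition valid_pols :: "nat \<Rightarrow> photons \<Rightarrow> bool" where
  "valid_pols m ks \<longleftrightarrow> (\<forall>i<m. snd (ks i) \<in> {1, 2})"

lemma valid_pols_drop_at: "valid_pols (Suc N) ks \<Longrightarrow> valid_pols N (drop_at N i ks)"
  by (auto simp: valid_pols_def drop_at_def)

lemma valid_pols_space_sector:
  assumes "z \<in> space (sector_measure m)"
  shows "valid_pols m (snd z)"
proof -
  have "snd z \<in> space (photons_measure m)"
    using assms by (auto simp: sector_measure_def space_pair_measure)
  moreover have "space photon_measure = UNIV \<times> {1, 2}"
    by (simp add: photon_measure_def space_pair_measure)
  ultimately show ?thesis
    unfolding valid_pols_def space_PiM PiE_iff by (auto simp: mem_Times_iff)
qed

lemma norm_creation_sum_le: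
  assumes "\<And>i. i < Suc N \<Longrightarrow> cmod (a i) \<le> b i"
  shows "norm (complex_of_real (1 / sqrt (real (Suc N))) *s (\<Sum>i<Suc N. a i *s v i))
    \<le> 1 / sqrt (Suc N) * (\<Sum>i<Suc N. b i * norm (v i))"
proof -
  have "norm (complex_of_real (1 / sqrt (real (Suc N))) *s (\<Sum>i<Suc N. a i *s v i))
      = 1 / sqrt (Suc N) * norm (\<Sum>i<Suc N. a i *s v i)"
    unfolding norm_vec_smult norm_of_real by simp
  also have "norm (\<Sum>i<Suc N. a i *s v i) \<le> (\<Sum>i<Suc N. norm (a i *s v i))"
    by (rule norm_sum)
  also have "\<dots> \<le> (\<Sum>i<Suc N. b i * norm (v i))"
    unfolding norm_vec_smult using assms by (intro sum_mono mult_right_mono) auto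
  finally show ?thesis by (simp add: divide_right_mono)
qed

lemma norm_Estar_le:
  assumes "pol_ok eps" "valid_pols (Suc N) ks"
  shows "norm (Estar eps \<Lambda> j N psi P ks)
    \<le> 1 / sqrt (Suc N) * (\<Sum>i<Suc N. H_majorant \<Lambda> (fst (ks i)) * norm (psi (P + fst (ks i)) (drop_at N i ks)))"
  unfolding Estar_def
proof (rule norm_creation_sum_le)
  fix i assume "i < Suc N"
  then have "snd (ks i) \<in> {1, 2}" using assms(2) by (simp add: valid_pols_def)
  then show "cmod (cnj (Hv eps \<Lambda> (snd (ks i)) (fst (ks i)) $ j)) \<le> H_majorant \<Lambda> (fst (ks i))"
    unfolding complex_mod_cnj by (rule cmod_Hv_le[OF assms(1)])
qed

lemma norm_Dstar_le:
  assumes "pol_ok eps" "valid_pols (Suc N) ks"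
  shows "norm (Dstar eps \<Lambda> j N psi P ks)
    \<le> 1 / sqrt (Suc N) * (\<Sum>i<Suc N. G_majorant \<Lambda> (fst (ks i)) * norm (psi (P + fst (ks i)) (drop_at N i ks)))"
  unfolding Dstar_def
proof (rule norm_creation_sum_le)
  fix i assume "i < Suc N"
  then have "snd (ks i) \<in> {1, 2}" using assms(2) by (simp add: valid_pols_def)
  then show "cmod (complex_of_real (Gv eps \<Lambda> (snd (ks i)) (fst (ks i)) $ j)) \<le> G_majorant \<Lambda> (fst (ks i))"
    unfolding norm_of_real by (rule abs_Gv_le[OF assms(1)])
qed

lemma norm_sigmaEstar_le:
  assumes "pol_ok eps" "valid_pols (Suc N) ks"
  shows "norm (sigmaEstar eps \<Lambda> N psi P ks)
    \<le> 3 / sqrt (Suc N) * (\<Sum>i<Suc N. H_majorant \<Lambda> (fst (ks i)) * norm (psi (P + fst (ks i)) (drop_at N i ks)))"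
proof -
  have "norm (sigmaEstar eps \<Lambda> N psi P ks) \<le> (\<Sum>j\<in>UNIV. norm (pauli j *v Estar eps \<Lambda> j N psi P ks))"
    unfolding sigmaEstar_def by (rule norm_sum)
  also have "\<dots> \<le> (\<Sum>j\<in>(UNIV::3 set). 1 / sqrt (Suc N) * (\<Sum>i<Suc N. H_majorant \<Lambda> (fst (ks i)) * norm (psi (P + fst (ks i)) (drop_at N i ks))))"
    unfolding norm_pauli_mult by (intro sum_mono norm_Estar_le assms)
  finally show ?thesis by simp
qed

lemma norm_DstarDstar_le:
  assumes "pol_ok eps" "valid_pols (Suc (Suc n)) ks"
  shows "norm (DstarDstar eps \<Lambda> n psi P ks) \<le> 3 / (sqrt (Suc (Suc n)) * sqrt (Suc n)) *
     (\<Sum>i<Suc (Suc n). \<Sum>l<Suc n. G_majorant \<Lambda> (fst (ks i)) * G_majorant \<Lambda> (fst (drop_at (Suc n) i ks l)) *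
        norm (psi (P + fst (ks i) + fst (drop_at (Suc n) i ks l)) (drop_at n l (drop_at (Suc n) i ks))))"
    (is "_ \<le> 3 / _ * ?S")
proof -
  have "norm (Dstar eps \<Lambda> j (Suc n) (Dstar eps \<Lambda> j n psi) P ks) \<le> 1 / (sqrt (Suc (Suc n)) * sqrt (Suc n)) * ?S" for j
  proof -
    have "norm (Dstar eps \<Lambda> j (Suc n) (Dstar eps \<Lambda> j n psi) P ks)
       \<le> 1 / sqrt (Suc (Suc n)) * (\<Sum>i<Suc (Suc n). G_majorant \<Lambda> (fst (ks i)) * norm (Dstar eps \<Lambda> j n psi (P + fst (ks i)) (drop_at (Suc n) i ks)))"
      by (rule norm_Dstar_le[OF assms])
    also have "\<dots> \<le> 1 / sqrt (Suc (Suc n)) * (\<Sum>i<Suc (Suc n). G_majorant \<Lambda> (fst (ks i)) * (1 / sqrt (Suc n) *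
        (\<Sum>l<Suc n. G_majorant \<Lambda> (fst (drop_at (Suc n) i ks l)) * norm (psi (P + fst (ks i) + fst (drop_at (Suc n) i ks l)) (drop_at n l (drop_at (Suc n) i ks))))))"
      using norm_Dstar_le[OF assms(1) valid_pols_drop_at[OF assms(2)]]
      by (intro mult_left_mono sum_mono) auto
    also have "\<dots> = 1 / (sqrt (Suc (Suc n)) * sqrt (Suc n)) * ?S"
      unfolding sum_distrib_left by (intro sum.cong refl) simp
    finally show ?thesis .
  qed
  then have "norm (DstarDstar eps \<Lambda> n psi P ks) \<le> (\<Sum>j\<in>(UNIV::3 set). 1 / (sqrt (Suc (Suc n)) * sqrt (Suc n)) * ?S)"
    unfolding DstarDstar_def by (intro order_trans[OF norm_sum] sum_mono)
  then show ?thesis by simp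
qed

lemma sum_drop_at:
  assumes "i \<le> N"
  shows "(\<Sum>l<N. f (drop_at N i ks l)) + f (ks i) = (\<Sum>j<Suc N. f (ks j))"
  using assms
proof (induction N arbitrary: i)
  case 0
  then show ?case by simp
next
  case (Suc N)
  show ?case
  proof (cases "i = Suc N")
    case True
    then show ?thesis by (simp add: drop_at_def)
  next
    case False
    then have iN: "i \<le> N" using Suc.prems by simp
    have "(\<Sum>l<Suc N. f (drop_at (Suc N) i ks l)) = (\<Sum>l<N. f (drop_at N i ks l)) + f (ks (Suc N))"
      using iN by (simp add: drop_at_def)
    then have "(\<Sum>l<Suc N. f (drop_at (Suc N) i ks l)) + f (ks i)
        = ((\<Sum>l<N. f (drop_at N i ks l)) + f (ks i)) + f (ks (Suc N))"
      by (simp add: ac_simps)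
    also have "\<dots> = (\<Sum>j<Suc (Suc N). f (ks j))"
      by (simp only: Suc.IH[OF iN] sum.lessThan_Suc[of _ "Suc N"])
    finally show ?thesis .
  qed
qed

lemma Hf_val_drop_at:
  "i \<le> N \<Longrightarrow> Hf_val N (drop_at N i ks) = Hf_val (Suc N) ks - norm (fst (ks i))"
  using sum_drop_at[of i N "\<lambda>k. norm (fst k)" ks] by (simp add: Hf_val_def)


section \<open>The pointwise estimate\<close>

lemma weighted_amgm:
  fixes X Y c a b \<tau> :: real
  assumes "0 \<le> X" "0 \<le> Y" "0 < \<tau>" "c\<^sup>2 = X * Y" "0 \<le> c"
  shows "c * a * b \<le> (X * a\<^sup>2 / \<tau> + \<tau> * (Y * b\<^sup>2)) / 2"
proof -
  define u where "u = sqrt X * a"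
  define v where "v = sqrt Y * b"
  have "c = sqrt X * sqrt Y"
    using assms by (metis real_sqrt_abs abs_of_nonneg real_sqrt_mult)
  then have "c * a * b = u * v" by (simp add: u_def v_def)
  also have "\<dots> \<le> (u\<^sup>2 / \<tau> + \<tau> * v\<^sup>2) / 2"
  proof -
    have "0 \<le> (u - \<tau> * v)\<^sup>2" by simp
    then have "2 * \<tau> * (u * v) \<le> u\<^sup>2 + \<tau>\<^sup>2 * v\<^sup>2" by (simp add: power2_eq_square algebra_simps)
    then show ?thesis using assms(3) by (simp add: field_simps power2_eq_square)
  qed
  also have "\<dots> = (X * a\<^sup>2 / \<tau> + \<tau> * (Y * b\<^sup>2)) / 2"
    using assms(1,2) by (simp add: u_def v_def power_mult_distrib)
  finally show ?thesis .
qed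

text \<open>The split is chosen so that both terms carry photon energies (\<open>|k\<^sub>1| |k\<^sub>2|\<close>, resp. \<open>|k\<^sub>0|\<close>)
  that the resolvent can absorb.\<close>
lemma majorant_product_le:
  assumes "0 < \<tau>"
  shows "H_majorant \<Lambda> k0 * G_majorant \<Lambda> k1 * G_majorant \<Lambda> k2 * a * b
    \<le> (chi \<Lambda> k0 * norm k1 * norm k2 * a\<^sup>2 / \<tau>
        + \<tau> * (chi \<Lambda> k0 * norm k0 / (4 * pi\<^sup>2) * cutoff_weight \<Lambda> k1 * cutoff_weight \<Lambda> k2 * b\<^sup>2)) / 2"
proof (rule weighted_amgm)
  show "(H_majorant \<Lambda> k0 * G_majorant \<Lambda> k1 * G_majorant \<Lambda> k2)\<^sup>2
      = chi \<Lambda> k0 * norm k1 * norm k2 * (chi \<Lambda> k0 * norm k0 / (4 * pi\<^sup>2) * cutoff_weight \<Lambda> k1 * cutoff_weight \<Lambda> k2)"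
    using chi_cases[of \<Lambda> k0] by (auto simp: power_mult_distrib H_majorant_sq G_majorant_sq)
qed (simp_all add: assms)

lemma resolvent_sum_le:
  fixes t :: "nat \<Rightarrow> real" and M :: nat
  defines "H \<equiv> \<Sum>j<M. t j"
  assumes t: "\<And>j. 0 \<le> t j" and "i < M" and "0 \<le> p"
  shows "(\<Sum>j<M. t j * (H - t j)) / (p + H) \<le> 2 * (H - t i)"
proof -
  have ti: "t i \<le> H" unfolding H_def using t \<open>i < M\<close> by (intro member_le_sum) auto
  have "0 \<le> H" unfolding H_def using t by (simp add: sum_nonneg)
  have "(\<Sum>j<M. t j * (H - t j)) = H * H - (\<Sum>j<M. (t j)\<^sup>2)"
    by (simp add: algebra_simps sum_subtractf sum_distrib_left power2_eq_square H_def)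
  also have "\<dots> \<le> H * H - (t i)\<^sup>2"
  proof -
    have "(t i)\<^sup>2 \<le> (\<Sum>j<M. (t j)\<^sup>2)" using \<open>i < M\<close> by (intro member_le_sum) auto
    then show ?thesis by simp
  qed
  also have "\<dots> = (H - t i) * (H + t i)" by (simp add: algebra_simps power2_eq_square)
  also have "\<dots> \<le> (H - t i) * (2 * H)" using ti by (intro mult_left_mono) auto
  also have "\<dots> = 2 * (H - t i) * H" by simp
  also have "\<dots> \<le> 2 * (H - t i) * (p + H)" using ti \<open>0 \<le> p\<close> by (intro mult_left_mono) auto
  finally have S: "(\<Sum>j<M. t j * (H - t j)) \<le> 2 * (H - t i) * (p + H)" .
  show ?thesis
  proof (cases "p + H = 0")
    case True
    then show ?thesis using ti by simp
  next
    case False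
    then have "0 < p + H" using \<open>0 \<le> H\<close> \<open>0 \<le> p\<close> by linarith
    then show ?thesis by (subst pos_divide_le_eq) (use S in auto)
  qed
qed

lemma majorant_sums_le:
  fixes x :: "nat \<Rightarrow> real^3" and y :: "nat \<Rightarrow> nat \<Rightarrow> real^3" and a :: "nat \<Rightarrow> real" and b :: "nat \<Rightarrow> nat \<Rightarrow> real"
    and M N :: nat
  assumes "0 < \<tau>"
  shows "(\<Sum>i<M. H_majorant \<Lambda> (x i) * a i) * (\<Sum>j<M. \<Sum>l<N. G_majorant \<Lambda> (x j) * G_majorant \<Lambda> (y j l) * b j l)
    \<le> ((\<Sum>i<M. chi \<Lambda> (x i) * (a i)\<^sup>2) * (\<Sum>j<M. norm (x j) * (\<Sum>l<N. norm (y j l))) / \<tau>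
       + \<tau> * ((\<Sum>i<M. chi \<Lambda> (x i) * norm (x i))
              * (\<Sum>j<M. \<Sum>l<N. cutoff_weight \<Lambda> (x j) * cutoff_weight \<Lambda> (y j l) * (b j l)\<^sup>2) / (4 * pi\<^sup>2))) / 2"
proof -
  define u where "u i j l = chi \<Lambda> (x i) * norm (x j) * norm (y j l) * (a i)\<^sup>2" for i j l
  define v where "v i j l = chi \<Lambda> (x i) * norm (x i) / (4 * pi\<^sup>2) * cutoff_weight \<Lambda> (x j) * cutoff_weight \<Lambda> (y j l) * (b j l)\<^sup>2"
    for i j l
  have "(\<Sum>i<M. H_majorant \<Lambda> (x i) * a i) * (\<Sum>j<M. \<Sum>l<N. G_majorant \<Lambda> (x j) * G_majorant \<Lambda> (y j l) * b j l)
      = (\<Sum>i<M. \<Sum>j<M. \<Sum>l<N. H_majorant \<Lambda> (x i) * G_majorant \<Lambda> (x j) * G_majorant \<Lambda> (y j l) * a i * b j l)"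
    unfolding sum_product unfolding sum_distrib_left by (intro sum.cong refl) (simp add: mult_ac)
  also have "\<dots> \<le> (\<Sum>i<M. \<Sum>j<M. \<Sum>l<N. (u i j l / \<tau> + \<tau> * v i j l) / 2)"
    unfolding u_def v_def by (intro sum_mono majorant_product_le assms)
  also have "\<dots> = ((\<Sum>i<M. \<Sum>j<M. \<Sum>l<N. u i j l) / \<tau> + \<tau> * (\<Sum>i<M. \<Sum>j<M. \<Sum>l<N. v i j l)) / 2"
    by (simp only: sum.distrib sum_divide_distrib sum_distrib_left add_divide_distrib)
  also have "(\<Sum>i<M. \<Sum>j<M. \<Sum>l<N. u i j l)
      = (\<Sum>i<M. chi \<Lambda> (x i) * (a i)\<^sup>2) * (\<Sum>j<M. norm (x j) * (\<Sum>l<N. norm (y j l)))"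
    unfolding u_def sum_product unfolding sum_distrib_left by (intro sum.cong refl) (simp add: mult_ac)
  also have "(\<Sum>i<M. \<Sum>j<M. \<Sum>l<N. v i j l)
      = (\<Sum>i<M. chi \<Lambda> (x i) * norm (x i))
        * (\<Sum>j<M. \<Sum>l<N. cutoff_weight \<Lambda> (x j) * cutoff_weight \<Lambda> (y j l) * (b j l)\<^sup>2) / (4 * pi\<^sup>2)"
    unfolding v_def sum_product unfolding sum_distrib_left sum_divide_distrib by (intro sum.cong refl) simp
  finally show ?thesis .
qed

lemma resolvent_majorant_le:
  fixes x :: "nat \<Rightarrow> real^3" and y :: "nat \<Rightarrow> nat \<Rightarrow> real^3" and a :: "nat \<Rightarrow> real" and b :: "nat \<Rightarrow> nat \<Rightarrow> real"
    and M N :: nat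
  defines "H \<equiv> \<Sum>j<M. norm (x j)"
  assumes "0 < \<tau>" and "0 \<le> p"
    and y: "\<And>j. j < M \<Longrightarrow> (\<Sum>l<N. norm (y j l)) = H - norm (x j)"
  shows "(\<Sum>i<M. H_majorant \<Lambda> (x i) * a i) * (\<Sum>j<M. \<Sum>l<N. G_majorant \<Lambda> (x j) * G_majorant \<Lambda> (y j l) * b j l) / (p + H)
    \<le> (\<Sum>i<M. chi \<Lambda> (x i) * (H - norm (x i)) * (a i)\<^sup>2) / \<tau>
       + \<tau> / (8 * pi\<^sup>2) * (\<Sum>j<M. \<Sum>l<N. cutoff_weight \<Lambda> (x j) * cutoff_weight \<Lambda> (y j l) * (b j l)\<^sup>2)"
    (is "_ \<le> ?A / \<tau> + \<tau> / (8 * pi\<^sup>2) * ?B")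
proof -
  define A0 where "A0 = (\<Sum>i<M. chi \<Lambda> (x i) * (a i)\<^sup>2)"
  define W where "W = (\<Sum>j<M. norm (x j) * (H - norm (x j)))"
  define C where "C = (\<Sum>i<M. chi \<Lambda> (x i) * norm (x i))"
  have "0 \<le> H" "0 \<le> C" "0 \<le> ?B" by (simp_all add: H_def C_def sum_nonneg)
  have W_eq: "(\<Sum>j<M. norm (x j) * (\<Sum>l<N. norm (y j l))) = W"
    unfolding W_def by (intro sum.cong refl) (simp add: y)
  have "A0 * (W / (p + H)) = (\<Sum>i<M. chi \<Lambda> (x i) * (a i)\<^sup>2 * (W / (p + H)))"
    by (simp add: A0_def sum_distrib_right sum_divide_distrib)
  also have "\<dots> \<le> (\<Sum>i<M. chi \<Lambda> (x i) * (a i)\<^sup>2 * (2 * (H - norm (x i))))"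
  proof (intro sum_mono mult_left_mono)
    fix i assume "i \<in> {..<M}"
    then show "W / (p + H) \<le> 2 * (H - norm (x i))"
      using resolvent_sum_le[of "\<lambda>j. norm (x j)" i M p] \<open>0 \<le> p\<close> by (simp add: W_def H_def)
  qed simp
  also have "\<dots> = 2 * ?A"
    unfolding sum_distrib_left by (intro sum.cong refl) (simp add: algebra_simps)
  finally have W_le: "A0 * (W / (p + H)) \<le> 2 * ?A" .
  have C_le: "C / (p + H) \<le> 1"
  proof -
    have "C \<le> H" unfolding C_def H_def by (intro sum_mono) (simp add: chi_def)
    then show ?thesis using \<open>0 \<le> H\<close> \<open>0 \<le> p\<close> \<open>0 \<le> C\<close> by (cases "p + H = 0") (auto simp: divide_le_eq)
  qed
  have "(\<Sum>i<M. H_majorant \<Lambda> (x i) * a i) * (\<Sum>j<M. \<Sum>l<N. G_majorant \<Lambda> (x j) * G_majorant \<Lambda> (y j l) * b j l) / (p + H)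
      \<le> ((A0 * W / \<tau> + \<tau> * (C * ?B / (4 * pi\<^sup>2))) / 2) / (p + H)"
    using majorant_sums_le[OF \<open>0 < \<tau>\<close>, where \<Lambda> = \<Lambda> and x = x and y = y and a = a and b = b and M = M and N = N] \<open>0 \<le> H\<close> \<open>0 \<le> p\<close>
    unfolding A0_def C_def W_eq by (intro divide_right_mono) auto
  also have "\<dots> = (A0 * (W / (p + H)) / \<tau> + \<tau> * (C / (p + H) * ?B / (4 * pi\<^sup>2))) / 2"
    by (simp add: add_divide_distrib mult_ac)
  also have "\<dots> \<le> (2 * ?A / \<tau> + \<tau> * (1 * ?B / (4 * pi\<^sup>2))) / 2"
    using W_le C_le \<open>0 < \<tau>\<close> \<open>0 \<le> ?B\<close>
    by (intro divide_right_mono add_mono mult_left_mono mult_right_mono) auto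
  also have "\<dots> = ?A / \<tau> + \<tau> / (8 * pi\<^sup>2) * ?B"
    by (simp add: field_simps)
  finally show ?thesis .
qed

section \<open>Integration of the pointwise estimate\<close>

definition norm_sq_density :: "sstate \<Rightarrow> (real^3) \<times> photons \<Rightarrow> real" where
  "norm_sq_density psi = (\<lambda>(P, ks). (norm (psi P ks))\<^sup>2)"

definition Hf_density :: "nat \<Rightarrow> sstate \<Rightarrow> (real^3) \<times> photons \<Rightarrow> real" where
  "Hf_density N psi = (\<lambda>(P, ks). Hf_val N ks * (norm (psi P ks))\<^sup>2)"

lemma Hf_val_nonneg: "0 \<le> Hf_val N ks"
  by (simp add: Hf_val_def sum_nonneg)

lemma norm_sq_density_nonneg: "0 \<le> norm_sq_density psi z"
  by (simp add: norm_sq_density_def case_prod_beta')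

lemma Hf_density_nonneg: "0 \<le> Hf_density N psi z"
  by (simp add: Hf_density_def case_prod_beta' Hf_val_nonneg)

lemma borel_measurable_Hf_val: "(\<lambda>z. Hf_val N (snd z)) \<in> borel_measurable (sector_measure N)"
proof -
  have "(\<lambda>z. norm (fst (snd z i))) \<in> borel_measurable (sector_measure N)" if "i < N" for i
    using measurable_compose[OF measurable_sector_photon[OF that] measurable_fst_photon] by measurable
  then show ?thesis
    unfolding Hf_val_def by (intro borel_measurable_sum) auto
qed

lemma
  assumes "in_sector N psi"
  shows borel_measurable_norm_sq_density: "norm_sq_density psi \<in> borel_measurable (sector_measure N)"
    and borel_measurable_Hf_density: "Hf_density N psi \<in> borel_measurable (sector_measure N)"
proof -
  have "(\<lambda>z. psi (fst z) (snd z)) \<in> borel_measurable (sector_measure N)"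
    using assms by (simp add: in_sector_def case_prod_beta')
  with borel_measurable_Hf_val[of N] show
    "norm_sq_density psi \<in> borel_measurable (sector_measure N)"
    "Hf_density N psi \<in> borel_measurable (sector_measure N)"
    unfolding norm_sq_density_def Hf_density_def case_prod_beta' by measurable
qed

lemma nn_integral_norm_sq_density:
  "in_sector N psi \<Longrightarrow> (\<integral>\<^sup>+z. norm_sq_density psi z \<partial>sector_measure N) = ennreal (sq_norm N psi)"
  unfolding in_sector_def sq_norm_def norm_sq_density_def
  by (subst nn_integral_eq_integral) (auto simp: case_prod_beta')

lemma nn_integral_Hf_density:
  "finite_Hf N psi \<Longrightarrow> (\<integral>\<^sup>+z. Hf_density N psi z \<partial>sector_measure N) = ennreal (Hf_expect N psi)"
  unfolding finite_Hf_def Hf_expect_def Hf_density_def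
  by (subst nn_integral_eq_integral) (auto simp: case_prod_beta' Hf_val_nonneg)

lemma Hf_expect_nonneg: "0 \<le> Hf_expect N psi"
  unfolding Hf_expect_def by (intro integral_nonneg_AE) (auto simp: Hf_val_nonneg)

lemma sq_norm_nonneg: "0 \<le> sq_norm N psi"
  unfolding sq_norm_def by (intro integral_nonneg_AE) auto

lemma nn_integral_E_term:
  assumes "0 < \<Lambda>" "i \<le> N" "in_sector N psi" "finite_Hf N psi"
  shows "(\<integral>\<^sup>+z. photon_removal (chi \<Lambda>) N i (Hf_density N psi) z \<partial>sector_measure (Suc N))
    = ennreal (8 / 3 * pi * \<Lambda> ^ 3 * Hf_expect N psi)"
proof -
  have "0 \<le> 8 / 3 * pi * \<Lambda> ^ 3" using assms(1) by simp
  then show ?thesis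
    using assms Hf_density_nonneg
    by (simp add: nn_integral_photon_removal borel_measurable_Hf_density nn_integral_chi_photon
        nn_integral_Hf_density flip: ennreal_mult')
qed

lemma nn_integral_DD_term_le:
  assumes "0 < \<Lambda>" "i \<le> Suc n" "l \<le> n" "in_sector n psi"
  shows "(\<integral>\<^sup>+z. photon_removal (cutoff_weight \<Lambda>) (Suc n) i
      (photon_removal (cutoff_weight \<Lambda>) n l (norm_sq_density psi)) z \<partial>sector_measure (Suc (Suc n)))
    \<le> ennreal (4 * \<Lambda>\<^sup>2 * sq_norm n psi)"
proof -
  define Cw where "Cw = (\<integral>\<^sup>+k. cutoff_weight \<Lambda> (fst k) \<partial>photon_measure)"
  have Cw: "Cw \<le> ennreal (2 * \<Lambda>)"
    unfolding Cw_def by (rule nn_integral_cutoff_weight_photon_le[OF assms(1)])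
  have inner: "photon_removal (cutoff_weight \<Lambda>) n l (norm_sq_density psi) \<in> borel_measurable (sector_measure (Suc n))"
    using assms by (intro measurable_photon_removal borel_measurable_norm_sq_density) auto
  have "(\<integral>\<^sup>+z. photon_removal (cutoff_weight \<Lambda>) (Suc n) i
      (photon_removal (cutoff_weight \<Lambda>) n l (norm_sq_density psi)) z \<partial>sector_measure (Suc (Suc n)))
      = Cw * (Cw * ennreal (sq_norm n psi))"
    using assms inner
    by (simp add: Cw_def nn_integral_photon_removal photon_removal_nonneg norm_sq_density_nonneg
        borel_measurable_norm_sq_density nn_integral_norm_sq_density)
  also have "\<dots> \<le> ennreal (2 * \<Lambda>) * (ennreal (2 * \<Lambda>) * ennreal (sq_norm n psi))"
    using Cw by (intro mult_mono) auto
  also have "\<dots> = ennreal (2 * \<Lambda> * (2 * \<Lambda> * sq_norm n psi))"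
  proof -
    have "0 \<le> 2 * \<Lambda>" using assms(1) by simp
    then show ?thesis by (simp only: ennreal_mult'[symmetric])
  qed
  also have "2 * \<Lambda> * (2 * \<Lambda> * sq_norm n psi) = 4 * \<Lambda>\<^sup>2 * sq_norm n psi"
    by (simp add: power2_eq_square)
  finally show ?thesis .
qed


lemma nn_integral_sum_le_ennreal:
  fixes F :: "'i \<Rightarrow> 'a \<Rightarrow> real"
  assumes "finite I" and "\<And>i. i \<in> I \<Longrightarrow> F i \<in> borel_measurable M" and "\<And>i z. 0 \<le> F i z"
    and "\<And>i. i \<in> I \<Longrightarrow> (\<integral>\<^sup>+z. F i z \<partial>M) \<le> ennreal (c i)" and "\<And>i. 0 \<le> c i"
  shows "(\<integral>\<^sup>+z. (\<Sum>i\<in>I. F i z) \<partial>M) \<le> ennreal (\<Sum>i\<in>I. c i)"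
proof -
  have "(\<integral>\<^sup>+z. (\<Sum>i\<in>I. F i z) \<partial>M) = (\<integral>\<^sup>+z. (\<Sum>i\<in>I. ennreal (F i z)) \<partial>M)"
    using assms(3) by (simp add: sum_nonneg)
  also have "\<dots> = (\<Sum>i\<in>I. \<integral>\<^sup>+z. F i z \<partial>M)"
    using assms(2) by (intro nn_integral_sum) auto
  also have "\<dots> \<le> (\<Sum>i\<in>I. ennreal (c i))"
    using assms(4) by (rule sum_mono)
  finally show ?thesis using assms(5) by simp
qed

lemma nn_integral_lincomb_le:
  fixes E D :: "'a \<Rightarrow> real"
  assumes "E \<in> borel_measurable M" "D \<in> borel_measurable M" "\<And>z. 0 \<le> E z" "\<And>z. 0 \<le> D z"
    and "(\<integral>\<^sup>+z. E z \<partial>M) \<le> ennreal e" "(\<integral>\<^sup>+z. D z \<partial>M) \<le> ennreal d"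
    and "0 \<le> a" "0 \<le> b" "0 \<le> e" "0 \<le> d"
  shows "(\<integral>\<^sup>+z. a * E z + b * D z \<partial>M) \<le> ennreal (a * e + b * d)"
proof -
  have "(\<integral>\<^sup>+z. a * E z + b * D z \<partial>M) = (\<integral>\<^sup>+z. ennreal a * E z + ennreal b * D z \<partial>M)"
    using assms(3,4,7,8) by (intro nn_integral_cong) (simp add: ennreal_plus ennreal_mult)
  also have "\<dots> = ennreal a * (\<integral>\<^sup>+z. E z \<partial>M) + ennreal b * (\<integral>\<^sup>+z. D z \<partial>M)"
    using assms(1,2) by (simp add: nn_integral_add nn_integral_cmult)
  also have "\<dots> \<le> ennreal a * ennreal e + ennreal b * ennreal d"
    using assms(5,6) by (intro add_mono mult_left_mono) auto
  also have "\<dots> = ennreal (a * e + b * d)"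
    using assms(7-10) by (simp add: ennreal_plus ennreal_mult)
  finally show ?thesis .
qed

lemma norm_integral_le_of_nn_integral_le:
  fixes f :: "'a \<Rightarrow> 'b::{banach, second_countable_topology}"
  assumes "(\<integral>\<^sup>+x. norm (f x) \<partial>M) \<le> ennreal Q" and "0 \<le> Q"
  shows "norm (integral\<^sup>L M f) \<le> Q"
proof (cases "integrable M f")
  case True
  then have "ennreal (norm (integral\<^sup>L M f)) \<le> ennreal Q"
    using integral_norm_bound_ennreal assms(1) order_trans by blast
  then show ?thesis using assms(2) by simp
next
  case False
  then show ?thesis using assms(2) by (simp add: not_integrable_integral_eq)
qed

definition E_side_density :: "real \<Rightarrow> nat \<Rightarrow> sstate \<Rightarrow> (real^3) \<times> photons \<Rightarrow> real" where
  "E_side_density \<Lambda> N psi z = (\<Sum>i<Suc N. photon_removal (chi \<Lambda>) N i (Hf_density N psi) z)"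

definition DD_side_density :: "real \<Rightarrow> nat \<Rightarrow> sstate \<Rightarrow> (real^3) \<times> photons \<Rightarrow> real" where
  "DD_side_density \<Lambda> n psi z = (\<Sum>i<Suc (Suc n). \<Sum>l<Suc n. photon_removal (cutoff_weight \<Lambda>) (Suc n) i
      (photon_removal (cutoff_weight \<Lambda>) n l (norm_sq_density psi)) z)"

lemma E_side_density_nonneg: "0 \<le> E_side_density \<Lambda> N psi z"
  by (simp add: E_side_density_def sum_nonneg photon_removal_nonneg Hf_density_nonneg)

lemma DD_side_density_nonneg: "0 \<le> DD_side_density \<Lambda> n psi z"
  by (simp add: DD_side_density_def sum_nonneg photon_removal_nonneg norm_sq_density_nonneg)

lemma borel_measurable_E_side_density:
  "in_sector N psi \<Longrightarrow> E_side_density \<Lambda> N psi \<in> borel_measurable (sector_measure (Suc N))"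
  unfolding E_side_density_def[abs_def]
  by (intro borel_measurable_sum measurable_photon_removal borel_measurable_Hf_density) auto

lemma borel_measurable_DD_side_density:
  "in_sector n psi \<Longrightarrow> DD_side_density \<Lambda> n psi \<in> borel_measurable (sector_measure (Suc (Suc n)))"
  unfolding DD_side_density_def[abs_def]
  by (intro borel_measurable_sum measurable_photon_removal borel_measurable_norm_sq_density) auto

lemma nn_integral_E_side_density_le:
  assumes "0 < \<Lambda>" "in_sector N psi" "finite_Hf N psi"
  shows "(\<integral>\<^sup>+z. E_side_density \<Lambda> N psi z \<partial>sector_measure (Suc N))
    \<le> ennreal (real (Suc N) * (8 / 3 * pi * \<Lambda> ^ 3 * Hf_expect N psi))"
proof -
  have "(\<integral>\<^sup>+z. E_side_density \<Lambda> N psi z \<partial>sector_measure (Suc N))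
      \<le> ennreal (\<Sum>i<Suc N. 8 / 3 * pi * \<Lambda> ^ 3 * Hf_expect N psi)"
    unfolding E_side_density_def using assms
    by (intro nn_integral_sum_le_ennreal)
      (auto intro!: photon_removal_nonneg Hf_density_nonneg measurable_photon_removal borel_measurable_Hf_density
        simp: nn_integral_E_term Hf_expect_nonneg)
  then show ?thesis by simp
qed

lemma nn_integral_DD_side_density_le:
  assumes "0 < \<Lambda>" "in_sector n psi"
  shows "(\<integral>\<^sup>+z. DD_side_density \<Lambda> n psi z \<partial>sector_measure (Suc (Suc n)))
    \<le> ennreal (real (Suc (Suc n)) * (real (Suc n) * (4 * \<Lambda>\<^sup>2 * sq_norm n psi)))"
proof -
  have removal_meas: "photon_removal (cutoff_weight \<Lambda>) (Suc n) i (photon_removal (cutoff_weight \<Lambda>) n l (norm_sq_density psi))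
      \<in> borel_measurable (sector_measure (Suc (Suc n)))" if "i < Suc (Suc n)" "l < Suc n" for i l
    using that assms(2) by (intro measurable_photon_removal borel_measurable_norm_sq_density) auto
  have removal_nonneg: "0 \<le> photon_removal (cutoff_weight \<Lambda>) (Suc n) i
      (photon_removal (cutoff_weight \<Lambda>) n l (norm_sq_density psi)) z" for i l z
    by (simp add: photon_removal_nonneg norm_sq_density_nonneg)
  have inner: "(\<integral>\<^sup>+z. (\<Sum>l<Suc n. photon_removal (cutoff_weight \<Lambda>) (Suc n) i
      (photon_removal (cutoff_weight \<Lambda>) n l (norm_sq_density psi)) z) \<partial>sector_measure (Suc (Suc n)))
    \<le> ennreal (\<Sum>l<Suc n. 4 * \<Lambda>\<^sup>2 * sq_norm n psi)" if "i \<in> {..<Suc (Suc n)}" for i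
    using that removal_meas assms
    by (intro nn_integral_sum_le_ennreal)
      (auto intro!: photon_removal_nonneg nn_integral_DD_term_le simp: norm_sq_density_nonneg sq_norm_nonneg)
  have "(\<integral>\<^sup>+z. DD_side_density \<Lambda> n psi z \<partial>sector_measure (Suc (Suc n)))
      \<le> ennreal (\<Sum>i<Suc (Suc n). \<Sum>l<Suc n. 4 * \<Lambda>\<^sup>2 * sq_norm n psi)"
    unfolding DD_side_density_def
    by (rule nn_integral_sum_le_ennreal)
      (use inner removal_meas in \<open>auto intro!: borel_measurable_sum simp: sum_nonneg removal_nonneg sq_norm_nonneg\<close>)
  then show ?thesis by simp
qed

text \<open>The factor \<open>9\<close> comes from the three components in each of \<open>\<sigma>\<cdot>E\<^sup>*\<close> and \<open>D\<^sup>*\<cdot>D\<^sup>*\<close>, the rest from the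
  normalisation of the symmetrised creation operators.\<close>
lemma cmod_integrand_le_majorants:
  assumes "pol_ok eps" and "valid_pols (Suc (Suc n)) ks"
  shows "cmod (cinner2 (sigmaEstar eps \<Lambda> (Suc n) psi1 P ks) (resolv (Suc (Suc n)) (DstarDstar eps \<Lambda> n psi) P ks))
    \<le> 9 / (real (Suc (Suc n)) * sqrt (Suc n)) *
      ((\<Sum>i<Suc (Suc n). H_majorant \<Lambda> (fst (ks i)) * norm (psi1 (P + fst (ks i)) (drop_at (Suc n) i ks)))
       * (\<Sum>i<Suc (Suc n). \<Sum>l<Suc n. G_majorant \<Lambda> (fst (ks i)) * G_majorant \<Lambda> (fst (drop_at (Suc n) i ks l)) *
            norm (psi (P + fst (ks i) + fst (drop_at (Suc n) i ks l)) (drop_at n l (drop_at (Suc n) i ks))))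
       / ((norm P)\<^sup>2 + Hf_val (Suc (Suc n)) ks))"
    (is "_ \<le> _ * (?S1 * ?S2 / ?R)")
proof -
  have "0 \<le> ?S1" by (simp add: sum_nonneg)
  have "0 \<le> ?R" by (simp add: Hf_val_nonneg)
  have "norm (resolv (Suc (Suc n)) (DstarDstar eps \<Lambda> n psi) P ks) = norm (DstarDstar eps \<Lambda> n psi P ks) / ?R"
    unfolding resolv_def norm_vec_smult norm_of_real using \<open>0 \<le> ?R\<close> by simp
  then have "cmod (cinner2 (sigmaEstar eps \<Lambda> (Suc n) psi1 P ks) (resolv (Suc (Suc n)) (DstarDstar eps \<Lambda> n psi) P ks))
      \<le> norm (sigmaEstar eps \<Lambda> (Suc n) psi1 P ks) * (norm (DstarDstar eps \<Lambda> n psi P ks) / ?R)"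
    using cmod_cinner2_le by metis
  also have "\<dots> \<le> 3 / sqrt (Suc (Suc n)) * ?S1 * (3 / (sqrt (Suc (Suc n)) * sqrt (Suc n)) * ?S2 / ?R)"
    using norm_sigmaEstar_le[OF assms] norm_DstarDstar_le[OF assms] \<open>0 \<le> ?R\<close> \<open>0 \<le> ?S1\<close>
    by (intro mult_mono divide_right_mono) auto
  also have "\<dots> = 9 / (real (Suc (Suc n)) * sqrt (Suc n)) * (?S1 * ?S2 / ?R)"
    by (simp add: field_simps)
  finally show ?thesis .
qed

lemma photon_removal_Hf_density:
  "i \<le> N \<Longrightarrow> photon_removal (chi \<Lambda>) N i (Hf_density N psi) (P, ks)
    = chi \<Lambda> (fst (ks i)) * (Hf_val (Suc N) ks - norm (fst (ks i))) * (norm (psi (P + fst (ks i)) (drop_at N i ks)))\<^sup>2"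
  by (simp add: photon_removal_def Hf_density_def Hf_val_drop_at)

lemma photon_removal_norm_sq_density:
  "photon_removal c (Suc n) i (photon_removal c n l (norm_sq_density psi)) (P, ks)
    = c (fst (ks i)) * c (fst (drop_at (Suc n) i ks l))
      * (norm (psi (P + fst (ks i) + fst (drop_at (Suc n) i ks l)) (drop_at n l (drop_at (Suc n) i ks))))\<^sup>2"
  by (simp add: photon_removal_def norm_sq_density_def add.assoc)

lemma cmod_integrand_le:
  assumes "pol_ok eps" and "valid_pols (Suc (Suc n)) ks" and "0 < \<tau>"
  shows "cmod (cinner2 (sigmaEstar eps \<Lambda> (Suc n) psi1 P ks) (resolv (Suc (Suc n)) (DstarDstar eps \<Lambda> n psi) P ks))
    \<le> 9 / (real (Suc (Suc n)) * sqrt (Suc n)) *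
      (E_side_density \<Lambda> (Suc n) psi1 (P, ks) / \<tau> + \<tau> / (8 * pi\<^sup>2) * DD_side_density \<Lambda> n psi (P, ks))"
proof -
  define x where "x i = fst (ks i)" for i
  define y where "y i l = fst (drop_at (Suc n) i ks l)" for i l
  define a where "a i = norm (psi1 (P + x i) (drop_at (Suc n) i ks))" for i
  define b where "b i l = norm (psi (P + x i + y i l) (drop_at n l (drop_at (Suc n) i ks)))" for i l
  define H where "H = (\<Sum>j<Suc (Suc n). norm (x j))"
  have H: "Hf_val (Suc (Suc n)) ks = H" by (simp add: Hf_val_def H_def x_def)
  have Hy: "(\<Sum>l<Suc n. norm (y i l)) = H - norm (x i)" if "i < Suc (Suc n)" for i
    using Hf_val_drop_at[of i "Suc n" ks] that H by (simp add: Hf_val_def x_def y_def)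
  have A_eq: "(\<Sum>i<Suc (Suc n). chi \<Lambda> (x i) * (H - norm (x i)) * (a i)\<^sup>2)
      = (\<Sum>i<Suc (Suc n). photon_removal (chi \<Lambda>) (Suc n) i (Hf_density (Suc n) psi1) (P, ks))"
    by (intro sum.cong refl) (simp add: photon_removal_Hf_density H x_def a_def)
  have B_eq: "(\<Sum>i<Suc (Suc n). \<Sum>l<Suc n. cutoff_weight \<Lambda> (x i) * cutoff_weight \<Lambda> (y i l) * (b i l)\<^sup>2)
      = (\<Sum>i<Suc (Suc n). \<Sum>l<Suc n. photon_removal (cutoff_weight \<Lambda>) (Suc n) i
            (photon_removal (cutoff_weight \<Lambda>) n l (norm_sq_density psi)) (P, ks))"
    by (simp only: photon_removal_norm_sq_density x_def y_def b_def)
  have "cmod (cinner2 (sigmaEstar eps \<Lambda> (Suc n) psi1 P ks) (resolv (Suc (Suc n)) (DstarDstar eps \<Lambda> n psi) P ks))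
      \<le> 9 / (real (Suc (Suc n)) * sqrt (Suc n)) *
        ((\<Sum>i<Suc (Suc n). H_majorant \<Lambda> (x i) * a i)
         * (\<Sum>i<Suc (Suc n). \<Sum>l<Suc n. G_majorant \<Lambda> (x i) * G_majorant \<Lambda> (y i l) * b i l) / ((norm P)\<^sup>2 + H))"
    using cmod_integrand_le_majorants[OF assms(1,2), of \<Lambda> psi1 P psi] unfolding H x_def y_def a_def b_def .
  also have "\<dots> \<le> 9 / (real (Suc (Suc n)) * sqrt (Suc n)) *
      ((\<Sum>i<Suc (Suc n). chi \<Lambda> (x i) * (H - norm (x i)) * (a i)\<^sup>2) / \<tau>
       + \<tau> / (8 * pi\<^sup>2) * (\<Sum>i<Suc (Suc n). \<Sum>l<Suc n. cutoff_weight \<Lambda> (x i) * cutoff_weight \<Lambda> (y i l) * (b i l)\<^sup>2))"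
    unfolding H_def by (intro mult_left_mono resolvent_majorant_le \<open>0 < \<tau>\<close> zero_le_power2 Hy[unfolded H_def]) simp_all
  finally show ?thesis
    unfolding A_eq B_eq E_side_density_def DD_side_density_def .
qed

lemma cmod_sector_inner_le:
  assumes "0 < \<Lambda>" and "pol_ok eps" and "0 < t"
    and psi: "in_sector n psi" and psi1: "in_sector (Suc n) psi1" "finite_Hf (Suc n) psi1"
  shows "cmod (sector_inner (Suc (Suc n)) (sigmaEstar eps \<Lambda> (Suc n) psi1) (resolv (Suc (Suc n)) (DstarDstar eps \<Lambda> n psi)))
    \<le> 24 * pi * \<Lambda> ^ 3 / t * Hf_expect (Suc n) psi1 + 9 * t * \<Lambda>\<^sup>2 / (2 * pi\<^sup>2) * sq_norm n psi"
proof -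
  define \<tau> where "\<tau> = t / sqrt (Suc n)"
  define K where "K = 9 / (real (Suc (Suc n)) * sqrt (Suc n))"
  define e where "e = real (Suc (Suc n)) * (8 / 3 * pi * \<Lambda> ^ 3 * Hf_expect (Suc n) psi1)"
  define d where "d = real (Suc (Suc n)) * (real (Suc n) * (4 * \<Lambda>\<^sup>2 * sq_norm n psi))"
  have "0 < \<tau>" "0 \<le> K" using \<open>0 < t\<close> by (simp_all add: \<tau>_def K_def)
  have "0 \<le> e" "0 \<le> d" using \<open>0 < \<Lambda>\<close> by (simp_all add: e_def d_def Hf_expect_nonneg sq_norm_nonneg)
  have "(\<integral>\<^sup>+z. cmod (case z of (P, ks) \<Rightarrow> cinner2 (sigmaEstar eps \<Lambda> (Suc n) psi1 P ks)
        (resolv (Suc (Suc n)) (DstarDstar eps \<Lambda> n psi) P ks)) \<partial>sector_measure (Suc (Suc n)))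
      \<le> (\<integral>\<^sup>+z. K / \<tau> * E_side_density \<Lambda> (Suc n) psi1 z + K * \<tau> / (8 * pi\<^sup>2) * DD_side_density \<Lambda> n psi z
          \<partial>sector_measure (Suc (Suc n)))"
  proof (intro nn_integral_mono ennreal_leI)
    fix z assume "z \<in> space (sector_measure (Suc (Suc n)))"
    from valid_pols_space_sector[OF this] obtain P ks where z: "z = (P, ks)" "valid_pols (Suc (Suc n)) ks"
      by (cases z) auto
    have "cmod (case z of (P, ks) \<Rightarrow> cinner2 (sigmaEstar eps \<Lambda> (Suc n) psi1 P ks)
        (resolv (Suc (Suc n)) (DstarDstar eps \<Lambda> n psi) P ks))
      \<le> K * (E_side_density \<Lambda> (Suc n) psi1 z / \<tau> + \<tau> / (8 * pi\<^sup>2) * DD_side_density \<Lambda> n psi z)"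
      unfolding z(1) K_def prod.case by (rule cmod_integrand_le[OF \<open>pol_ok eps\<close> z(2) \<open>0 < \<tau>\<close>])
    also have "\<dots> = K / \<tau> * E_side_density \<Lambda> (Suc n) psi1 z + K * \<tau> / (8 * pi\<^sup>2) * DD_side_density \<Lambda> n psi z"
      by (simp add: field_simps)
    finally show "cmod (case z of (P, ks) \<Rightarrow> cinner2 (sigmaEstar eps \<Lambda> (Suc n) psi1 P ks)
        (resolv (Suc (Suc n)) (DstarDstar eps \<Lambda> n psi) P ks))
      \<le> K / \<tau> * E_side_density \<Lambda> (Suc n) psi1 z + K * \<tau> / (8 * pi\<^sup>2) * DD_side_density \<Lambda> n psi z" .
  qed
  also have "\<dots> \<le> ennreal (K / \<tau> * e + K * \<tau> / (8 * pi\<^sup>2) * d)"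
    unfolding e_def d_def using \<open>0 \<le> e\<close> \<open>0 \<le> d\<close> \<open>0 \<le> K\<close> \<open>0 < \<tau>\<close> \<open>0 < \<Lambda>\<close> psi psi1
    by (intro nn_integral_lincomb_le borel_measurable_E_side_density borel_measurable_DD_side_density
        E_side_density_nonneg DD_side_density_nonneg nn_integral_E_side_density_le nn_integral_DD_side_density_le)
      (simp_all add: e_def d_def)
  finally have "cmod (sector_inner (Suc (Suc n)) (sigmaEstar eps \<Lambda> (Suc n) psi1) (resolv (Suc (Suc n)) (DstarDstar eps \<Lambda> n psi)))
      \<le> K / \<tau> * e + K * \<tau> / (8 * pi\<^sup>2) * d"
    unfolding sector_inner_def
    using \<open>0 \<le> e\<close> \<open>0 \<le> d\<close> \<open>0 \<le> K\<close> \<open>0 < \<tau>\<close> by (intro norm_integral_le_of_nn_integral_le) auto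
  also have "K / \<tau> * e + K * \<tau> / (8 * pi\<^sup>2) * d
      = 24 * pi * \<Lambda> ^ 3 / t * Hf_expect (Suc n) psi1 + 9 * t * \<Lambda>\<^sup>2 / (2 * pi\<^sup>2) * sq_norm n psi"
  proof -
    have "sqrt (Suc n) * sqrt (Suc n) = real (Suc n)" by simp
    then show ?thesis
      using \<open>0 < t\<close> by (simp add: K_def \<tau>_def e_def d_def field_simps power2_eq_square del: of_nat_Suc)
  qed
  finally show ?thesis .
qed

lemma coupling_scaling_le:
  fixes \<alpha> \<Lambda> E N :: real
  assumes "0 < \<alpha>" "0 < \<Lambda>" "0 \<le> E" "0 \<le> N"
  shows "\<alpha> powr (3/2) * (24 * pi * \<Lambda> ^ 3 / (sqrt \<alpha> * \<Lambda>) * E + 9 * (sqrt \<alpha> * \<Lambda>) * \<Lambda>\<^sup>2 / (2 * pi\<^sup>2) * N)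
    \<le> 100 * (\<alpha>\<^sup>2 * (\<Lambda> + \<Lambda> ^ 3) * N + \<alpha> * (\<Lambda> + \<Lambda>\<^sup>2) * E)"
proof -
  have "\<alpha> powr (3/2) = \<alpha> * sqrt \<alpha>"
    using assms(1) by (simp add: powr_add[of \<alpha> 1 "1/2", simplified] powr_half_sqrt)
  moreover have "sqrt \<alpha> * sqrt \<alpha> = \<alpha>" using assms(1) by simp
  ultimately have "\<alpha> powr (3/2) * (24 * pi * \<Lambda> ^ 3 / (sqrt \<alpha> * \<Lambda>) * E + 9 * (sqrt \<alpha> * \<Lambda>) * \<Lambda>\<^sup>2 / (2 * pi\<^sup>2) * N)
      = 24 * pi * (\<alpha> * \<Lambda>\<^sup>2 * E) + 9 / (2 * pi\<^sup>2) * (\<alpha>\<^sup>2 * \<Lambda> ^ 3 * N)"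
    using assms(1,2) by (simp add: field_simps power2_eq_square power3_eq_cube)
  also have "\<dots> \<le> 100 * (\<alpha> * (\<Lambda> + \<Lambda>\<^sup>2) * E) + 100 * (\<alpha>\<^sup>2 * (\<Lambda> + \<Lambda> ^ 3) * N)"
  proof (intro add_mono mult_mono)
    show "24 * pi \<le> 100" using pi_less_4 by simp
    have "9 \<le> pi\<^sup>2" using mult_mono[of 3 pi 3 pi] pi_gt3 by (simp add: power2_eq_square)
    then show "9 / (2 * pi\<^sup>2) \<le> 100" by (simp add: field_simps)
  qed (use assms in \<open>auto intro!: mult_left_mono mult_right_mono\<close>)
  finally show ?thesis by (simp add: algebra_simps)
qed

theorem lemmaA2:
  shows "\<exists>C>0. \<forall>\<Lambda>>0. \<forall>eps. pol_ok eps \<longrightarrow>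
    (\<forall>\<alpha>>0. \<forall>n psi_n psi_n1.
       in_sector n psi_n \<and> finite_Hf n psi_n \<and>
       in_sector (Suc n) psi_n1 \<and> finite_Hf (Suc n) psi_n1 \<longrightarrow>
       \<alpha> powr (3/2) *
         cmod (sector_inner (Suc (Suc n)) (sigmaEstar eps \<Lambda> (Suc n) psi_n1)
                 (resolv (Suc (Suc n)) (DstarDstar eps \<Lambda> n psi_n)))
       \<le> C * (\<alpha>\<^sup>2 * (\<Lambda> + \<Lambda>^3) * sq_norm n psi_n
              + \<alpha> * (\<Lambda> + \<Lambda>\<^sup>2) * Hf_expect (Suc n) psi_n1))"
proof (intro exI[of _ 100] conjI allI impI)
  fix \<Lambda> \<alpha> :: real and eps n psi_n psi_n1
  assume "0 < \<Lambda>" "pol_ok eps" "0 < \<alpha>"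
    and psi: "in_sector n psi_n \<and> finite_Hf n psi_n \<and> in_sector (Suc n) psi_n1 \<and> finite_Hf (Suc n) psi_n1"
  have "cmod (sector_inner (Suc (Suc n)) (sigmaEstar eps \<Lambda> (Suc n) psi_n1) (resolv (Suc (Suc n)) (DstarDstar eps \<Lambda> n psi_n)))
    \<le> 24 * pi * \<Lambda> ^ 3 / (sqrt \<alpha> * \<Lambda>) * Hf_expect (Suc n) psi_n1
      + 9 * (sqrt \<alpha> * \<Lambda>) * \<Lambda>\<^sup>2 / (2 * pi\<^sup>2) * sq_norm n psi_n"
    using psi \<open>0 < \<Lambda>\<close> \<open>0 < \<alpha>\<close> by (intro cmod_sector_inner_le \<open>pol_ok eps\<close>) auto
  then have "\<alpha> powr (3/2) * cmod (sector_inner (Suc (Suc n)) (sigmaEstar eps \<Lambda> (Suc n) psi_n1) (resolv (Suc (Suc n)) (DstarDstar eps \<Lambda> n psi_n)))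
    \<le> \<alpha> powr (3/2) * (24 * pi * \<Lambda> ^ 3 / (sqrt \<alpha> * \<Lambda>) * Hf_expect (Suc n) psi_n1
      + 9 * (sqrt \<alpha> * \<Lambda>) * \<Lambda>\<^sup>2 / (2 * pi\<^sup>2) * sq_norm n psi_n)"
    by (rule mult_left_mono) simp
  also have "\<dots> \<le> 100 * (\<alpha>\<^sup>2 * (\<Lambda> + \<Lambda> ^ 3) * sq_norm n psi_n + \<alpha> * (\<Lambda> + \<Lambda>\<^sup>2) * Hf_expect (Suc n) psi_n1)"
    using \<open>0 < \<alpha>\<close> \<open>0 < \<Lambda>\<close> by (intro coupling_scaling_le Hf_expect_nonneg sq_norm_nonneg)
  finally show "\<alpha> powr (3/2) * cmod (sector_inner (Suc (Suc n)) (sigmaEstar eps \<Lambda> (Suc n) psi_n1)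
      (resolv (Suc (Suc n)) (DstarDstar eps \<Lambda> n psi_n)))
    \<le> 100 * (\<alpha>\<^sup>2 * (\<Lambda> + \<Lambda> ^ 3) * sq_norm n psi_n + \<alpha> * (\<Lambda> + \<Lambda>\<^sup>2) * Hf_expect (Suc n) psi_n1)" .
qed simp

end
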